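(* Let $L>0$, $\nu\in\mathbb{R}$, with periodic or Neumann boundary conditions on $[0,L]$, and let $W_A^N(t)=\int_0^te^{A(t-s)}\,dW_N(s)$. There exists a constant $C$ independent of $N$ such that $$\mathbb{E}\,\|\partial_xW_A^N(t)\|_{L^\infty}^4\le C\,t^{1/8}\quad\text{for all }t\le1.$$
   Context: $L^2_0=\{f\in L^2([0,L]):\int_0^Lf\,dx=0\}$. $A=-\partial_x^4+\nu\partial_x^2$ is the self-adjoint operator on $L^2_0$ with domain the mean-zero $H^4([0,L])$ functions satisfying the boundary conditions; $\{e_k\}_{k\ge1}$ is an orthonormal basis of $L^2_0$ of eigenvectors of $A$ (Fourier modes). $W_N(t)=\sum_{k=1}^N\alpha_ke_kw_k(t)$ where the $w_k$ are independent standard Brownian motions and the $\alpha_k$ are positive numbers bounded by a constant independent of $k$. *)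

theory Defs
  imports "HOL-Probability.Probability"
begin

datatype boundary_cond = Periodic | Neumann

text \<open>Frequency of the k-th Fourier mode (k \<ge> 1) of the mean-zero basis on [0,L].
  Periodic: e_(2j-1) = sqrt(2/L) cos(2 pi j x/L), e_(2j) = sqrt(2/L) sin(2 pi j x/L).\<close>
definition fourier_freq :: "real \<Rightarrow> boundary_cond \<Rightarrow> nat \<Rightarrow> real" where
  "fourier_freq L bc k = (case bc of
      Periodic \<Rightarrow> 2 * pi * real ((k + 1) div 2) / L
    | Neumann \<Rightarrow> pi * real k / L)"

definition fourier_mode :: "real \<Rightarrow> boundary_cond \<Rightarrow> nat \<Rightarrow> real \<Rightarrow> real" where
  "fourier_mode L bc k x = (case bc of
      Periodic \<Rightarrow> (if odd k then sqrt (2 / L) * cos (fourier_freq L bc k * x)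
                   else sqrt (2 / L) * sin (fourier_freq L bc k * x))
    | Neumann \<Rightarrow> sqrt (2 / L) * cos (fourier_freq L bc k * x))"

text \<open>Eigenvalue of A = -d^4/dx^4 + nu d^2/dx^2 on the k-th mode.\<close>
definition A_eigenvalue :: "real \<Rightarrow> real \<Rightarrow> boundary_cond \<Rightarrow> nat \<Rightarrow> real" where
  "A_eigenvalue L \<nu> bc k = - (fourier_freq L bc k ^ 4) - \<nu> * (fourier_freq L bc k ^ 2)"

definition std_bm :: "'a measure \<Rightarrow> (real \<Rightarrow> 'a \<Rightarrow> real) \<Rightarrow> bool" where
  "std_bm M B \<longleftrightarrow>
     (\<forall>t. B t \<in> borel_measurable M) \<and>
     (\<forall>\<omega>\<in>space M. B 0 \<omega> = 0 \<and> continuous_on {0..} (\<lambda>t. B t \<omega>)) \<and>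
     (\<forall>s t. 0 \<le> s \<and> s < t \<longrightarrow>
        distributed M lborel (\<lambda>\<omega>. B t \<omega> - B s \<omega>) (normal_density 0 (sqrt (t - s)))) \<and>
     (\<forall>ts :: nat \<Rightarrow> real. strict_mono ts \<and> 0 \<le> ts 0 \<longrightarrow>
        prob_space.indep_vars M (\<lambda>_. borel) (\<lambda>i \<omega>. B (ts (Suc i)) \<omega> - B (ts i) \<omega>) UNIV)"

text \<open>Wiener integral of a deterministic integrand f over [0,t] against a path of w,
  as the limit of left-point Riemann(-Stieltjes) sums on uniform partitions (this limit
  exists pathwise for C^1 integrands and continuous paths, and coincides with the Ito integral).\<close>
definition wiener_int :: "(real \<Rightarrow> real) \<Rightarrow> (real \<Rightarrow> 'a \<Rightarrow> real) \<Rightarrow> real \<Rightarrow> 'a \<Rightarrow> real" where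
  "wiener_int f w t \<omega> =
     lim (\<lambda>n. \<Sum>i<n. f (t * real i / real n) *
                      (w (t * real (Suc i) / real n) \<omega> - w (t * real i / real n) \<omega>))"

text \<open>W_A^N(t)(x) = \<integral>_0^t e^{A(t-s)} dW_N(s) evaluated at x, with
  W_N = \<Sum>_{k=1}^N \<alpha>_k e_k w_k.\<close>
definition stoch_conv ::
  "real \<Rightarrow> real \<Rightarrow> boundary_cond \<Rightarrow> (nat \<Rightarrow> real) \<Rightarrow> (nat \<Rightarrow> real \<Rightarrow> 'a \<Rightarrow> real)
     \<Rightarrow> nat \<Rightarrow> real \<Rightarrow> real \<Rightarrow> 'a \<Rightarrow> real" where
  "stoch_conv L \<nu> bc \<alpha> w N t x \<omega> =
     (\<Sum>k=1..N. \<alpha> k * fourier_mode L bc k x *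
        wiener_int (\<lambda>s. exp (A_eigenvalue L \<nu> bc k * (t - s))) (w k) t \<omega>)"

end

(* Each Fourier mode of the stochastic convolution is the Wiener integral of the deterministic
   kernel exp (lambda_k (t - s)); its left-point Riemann sums are exactly centred Gaussians, so by
   Fatou's lemma the fourth moment of any finite combination sum c_k Z_k is at most
   3 (sum c_k^2 Var_k)^2.  The variance of the k-th mode is bounded both by t and by q_k^(-4)
   (q_k the frequency), hence by C t^(1/16) q_k^(-15/4).  The x-derivative of the k-th mode has
   size q_k and is Hoelder of order 5/8 with constant q_k^(1 + 5/8), so the fourth moments of the
   derivative at 0 and of its increments are at most C t^(1/8) and C t^(1/8) |x - y|^(5/4), the
   sums over k being convergent zeta series.  A dyadic chaining argument in the spirit of
   Kolmogorov's continuity theorem, with Hoelder's inequality and geometric weights across the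
   dyadic levels, turns these into the bound for the fourth moment of the supremum over [0, L]. *)

theory Submission
  imports Defs
begin

section \<open>Riemann--Stieltjes sums against continuous paths\<close>

lemma riemann_stieltjes_step_error:
  fixes g g' w :: "real \<Rightarrow> real"
  assumes ab: "0 \<le> a" "a \<le> b" "b \<le> t"
    and g: "\<And>s. s \<in> {0..t} \<Longrightarrow> (g has_real_derivative g' s) (at s within {0..t})"
    and cont: "continuous_on {0..t} (\<lambda>s. g' s * w s)"
    and G: "\<And>s. s \<in> {a..b} \<Longrightarrow> \<bar>g' s\<bar> \<le> G"
    and \<epsilon>: "\<And>s. s \<in> {a..b} \<Longrightarrow> \<bar>w b - w s\<bar> \<le> \<epsilon>"
  shows "\<bar>g a * (w b - w a) - ((g b * w b - integral {0..b} (\<lambda>s. g' s * w s))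
                              - (g a * w a - integral {0..a} (\<lambda>s. g' s * w s)))\<bar> \<le> G * \<epsilon> * (b - a)"
proof -
  define h where "h s = g s * w b - integral {0..s} (\<lambda>s. g' s * w s)" for s
  have sub: "{a..b} \<subseteq> {0..t}" using ab by auto
  have dh: "(h has_real_derivative g' s * (w b - w s)) (at s within {a..b})" if "s \<in> {a..b}" for s
  proof -
    have "(g has_real_derivative g' s) (at s within {a..b})"
      using DERIV_subset[OF g sub] that sub by auto
    moreover have "((\<lambda>s. integral {0..s} (\<lambda>s. g' s * w s)) has_real_derivative g' s * w s) (at s within {a..b})"
      using DERIV_subset[OF integral_has_real_derivative[OF cont] sub] that sub by auto
    ultimately show ?thesis
      unfolding h_def by (auto intro!: derivative_eq_intros simp: algebra_simps)
  qed
  have "norm (g' s * (w b - w s)) \<le> G * \<epsilon>" if "s \<in> {a..b}" for s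
    using G[OF that] \<epsilon>[OF that] by (simp add: abs_mult mult_mono')
  then have "norm (h b - h a) \<le> G * \<epsilon> * norm (b - a)"
    using ab by (intro field_differentiable_bound[OF convex_real_interval(5) dh]) auto
  moreover have "g a * (w b - w a) - ((g b * w b - integral {0..b} (\<lambda>s. g' s * w s))
                   - (g a * w a - integral {0..a} (\<lambda>s. g' s * w s))) = - (h b - h a)"
    unfolding h_def by (simp add: algebra_simps)
  ultimately show ?thesis using ab by simp
qed

definition riemann_stieltjes_sum :: "(real \<Rightarrow> real) \<Rightarrow> (real \<Rightarrow> real) \<Rightarrow> real \<Rightarrow> nat \<Rightarrow> real" where
  "riemann_stieltjes_sum g w t n =
     (\<Sum>i<n. g (t * real i / real n) * (w (t * real (Suc i) / real n) - w (t * real i / real n)))"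

lemma riemann_stieltjes_sum_error_le:
  fixes g g' w :: "real \<Rightarrow> real"
  assumes t: "t > 0" and n: "n > 0"
    and g: "\<And>s. s \<in> {0..t} \<Longrightarrow> (g has_real_derivative g' s) (at s within {0..t})"
    and cont: "continuous_on {0..t} (\<lambda>s. g' s * w s)"
    and G: "\<And>s. s \<in> {0..t} \<Longrightarrow> \<bar>g' s\<bar> \<le> G"
    and \<epsilon>: "\<And>x y. x \<in> {0..t} \<Longrightarrow> y \<in> {0..t} \<Longrightarrow> \<bar>x - y\<bar> \<le> t / real n \<Longrightarrow> \<bar>w x - w y\<bar> \<le> \<epsilon>"
  shows "\<bar>riemann_stieltjes_sum g w t n - (g t * w t - g 0 * w 0 - integral {0..t} (\<lambda>s. g' s * w s))\<bar>
           \<le> G * \<epsilon> * t"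
proof -
  define \<Psi> where "\<Psi> s = g s * w s - integral {0..s} (\<lambda>s. g' s * w s)" for s
  define tt where "tt i = t * real i / real n" for i
  have tt_step: "tt (Suc i) - tt i = t / real n" for i
    by (simp add: tt_def add_divide_distrib distrib_left)
  have mesh_pos: "0 < t / real n" using t n by simp
  have tt_in: "tt i \<in> {0..t}" if "i \<le> n" for i
    using that t n by (auto simp: tt_def field_simps)
  have step: "\<bar>g (tt i) * (w (tt (Suc i)) - w (tt i)) - (\<Psi> (tt (Suc i)) - \<Psi> (tt i))\<bar>
                \<le> G * \<epsilon> * (t / real n)" if i: "i < n" for i
  proof -
    have ab: "0 \<le> tt i" "tt i \<le> tt (Suc i)" "tt (Suc i) \<le> t"
      using tt_in[of i] tt_in[of "Suc i"] tt_step[of i] mesh_pos i by auto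
    have "\<bar>w (tt (Suc i)) - w s\<bar> \<le> \<epsilon>" if "s \<in> {tt i..tt (Suc i)}" for s
      using \<epsilon>[of "tt (Suc i)" s] that ab tt_step[of i] by auto
    from riemann_stieltjes_step_error[OF ab g cont G this]
    show ?thesis using ab tt_step[of i] unfolding \<Psi>_def by auto
  qed
  have "g t * w t - g 0 * w 0 - integral {0..t} (\<lambda>s. g' s * w s) = (\<Sum>i<n. \<Psi> (tt (Suc i)) - \<Psi> (tt i))"
    using sum_lessThan_telescope[of "\<lambda>i. \<Psi> (tt i)" n] n by (simp add: \<Psi>_def tt_def)
  then have "\<bar>(\<Sum>i<n. g (tt i) * (w (tt (Suc i)) - w (tt i)))
               - (g t * w t - g 0 * w 0 - integral {0..t} (\<lambda>s. g' s * w s))\<bar>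
      = \<bar>\<Sum>i<n. g (tt i) * (w (tt (Suc i)) - w (tt i)) - (\<Psi> (tt (Suc i)) - \<Psi> (tt i))\<bar>"
    by (simp add: sum_subtractf)
  also have "\<dots> \<le> (\<Sum>i<n. G * \<epsilon> * (t / real n))"
    using step by (intro order_trans[OF sum_abs] sum_mono) auto
  also have "\<dots> = G * \<epsilon> * t"
    using n by simp
  finally show ?thesis by (simp add: riemann_stieltjes_sum_def tt_def)
qed

lemma riemann_stieltjes_sums_tendsto:
  fixes g g' w :: "real \<Rightarrow> real"
  assumes t: "t > 0"
    and g: "\<And>s. s \<in> {0..t} \<Longrightarrow> (g has_real_derivative g' s) (at s within {0..t})"
    and g': "continuous_on {0..t} g'" and w: "continuous_on {0..t} w"
  shows "(\<lambda>n. riemann_stieltjes_sum g w t n) \<longlonglongrightarrow> g t * w t - g 0 * w 0 - integral {0..t} (\<lambda>s. g' s * w s)"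
proof (rule LIMSEQ_I)
  have "bounded (g' ` {0..t})"
    by (intro compact_imp_bounded compact_continuous_image g') simp
  then obtain G where G0: "G > 0" and G: "\<And>s. s \<in> {0..t} \<Longrightarrow> \<bar>g' s\<bar> \<le> G"
    unfolding bounded_pos by auto
  have cont: "continuous_on {0..t} (\<lambda>s. g' s * w s)" by (intro continuous_intros g' w)
  fix r :: real assume r: "r > 0"
  define \<epsilon> where "\<epsilon> = r / (2 * G * t)"
  have \<epsilon>: "\<epsilon> > 0" unfolding \<epsilon>_def using r t G0 by auto
  obtain d where d: "d > 0"
    and dw: "\<And>x y. x \<in> {0..t} \<Longrightarrow> y \<in> {0..t} \<Longrightarrow> dist y x < d \<Longrightarrow> dist (w y) (w x) < \<epsilon>"
    using compact_uniformly_continuous[OF w compact_Icc] \<epsilon> unfolding uniformly_continuous_on_def by metis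
  obtain n0 :: nat where n0: "t / d < real n0" using reals_Archimedean2 by blast
  show "\<exists>n0. \<forall>n\<ge>n0. norm (riemann_stieltjes_sum g w t n
                        - (g t * w t - g 0 * w 0 - integral {0..t} (\<lambda>s. g' s * w s))) < r"
  proof (intro exI allI impI)
    fix n assume "n \<ge> Suc n0"
    then have n: "n > 0" and "t / d < real n" using n0 by auto
    then have "t / real n < d" using d by (simp add: field_simps)
    then have "\<bar>w x - w y\<bar> \<le> \<epsilon>" if "x \<in> {0..t}" "y \<in> {0..t}" "\<bar>x - y\<bar> \<le> t / real n" for x y
      using dw[of y x] that by (simp add: dist_real_def)
    from riemann_stieltjes_sum_error_le[OF t n g cont G this]
    have "norm (riemann_stieltjes_sum g w t n
                 - (g t * w t - g 0 * w 0 - integral {0..t} (\<lambda>s. g' s * w s))) \<le> G * \<epsilon> * t"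
      by simp
    also have "G * \<epsilon> * t = r / 2"
      using t G0 by (simp add: \<epsilon>_def)
    also have "\<dots> < r" using r by simp
    finally show "norm (riemann_stieltjes_sum g w t n
                        - (g t * w t - g 0 * w 0 - integral {0..t} (\<lambda>s. g' s * w s))) < r" .
  qed
qed

section \<open>Wiener sums are Gaussian\<close>

definition wiener_sum :: "(real \<Rightarrow> real) \<Rightarrow> (real \<Rightarrow> 'a \<Rightarrow> real) \<Rightarrow> real \<Rightarrow> nat \<Rightarrow> 'a \<Rightarrow> real" where
  "wiener_sum f B t n \<omega> = riemann_stieltjes_sum f (\<lambda>s. B s \<omega>) t n"

definition wiener_sum_var :: "(real \<Rightarrow> real) \<Rightarrow> real \<Rightarrow> nat \<Rightarrow> real" where
  "wiener_sum_var f t n = (\<Sum>i<n. (f (t * real i / real n))\<^sup>2 * (t / real n))"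

lemma wiener_sum_var_nonneg: "t \<ge> 0 \<Longrightarrow> wiener_sum_var f t n \<ge> 0"
  unfolding wiener_sum_var_def by (intro sum_nonneg) auto

lemma wiener_int_eq_lim: "wiener_int f B t \<omega> = lim (\<lambda>n. wiener_sum f B t n \<omega>)"
  by (simp add: wiener_int_def wiener_sum_def riemann_stieltjes_sum_def)

lemma wiener_sum_measurable [measurable]:
  assumes "\<And>s. B s \<in> borel_measurable M"
  shows "wiener_sum f B t n \<in> borel_measurable M"
  unfolding wiener_sum_def[abs_def] riemann_stieltjes_sum_def using assms by measurable

lemma wiener_sum_tendsto:
  assumes B: "std_bm M B" and \<omega>: "\<omega> \<in> space M" and t: "t \<ge> 0"
    and f: "\<And>s. s \<in> {0..t} \<Longrightarrow> (f has_real_derivative f' s) (at s within {0..t})"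
    and f': "continuous_on {0..t} f'"
  shows "(\<lambda>n. wiener_sum f B t n \<omega>) \<longlonglongrightarrow> wiener_int f B t \<omega>"
proof (cases "t = 0")
  case True
  then show ?thesis by (simp add: wiener_int_eq_lim wiener_sum_def riemann_stieltjes_sum_def)
next
  case False
  have "continuous_on {0..t} (\<lambda>s. B s \<omega>)"
    using B \<omega> by (auto simp: std_bm_def intro: continuous_on_subset)
  from riemann_stieltjes_sums_tendsto[OF _ f f' this] False t
  have "convergent (\<lambda>n. wiener_sum f B t n \<omega>)"
    unfolding wiener_sum_def by (auto intro: convergentI)
  then show ?thesis by (simp add: wiener_int_eq_lim convergent_LIMSEQ_iff)
qed

lemma wiener_int_measurable:
  assumes B: "std_bm M B" and t: "t \<ge> 0"
    and f: "\<And>s. s \<in> {0..t} \<Longrightarrow> (f has_real_derivative f' s) (at s within {0..t})"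
    and f': "continuous_on {0..t} f'"
  shows "wiener_int f B t \<in> borel_measurable M"
proof -
  have "\<And>s. B s \<in> borel_measurable M" using B by (simp add: std_bm_def)
  then show ?thesis
    using borel_measurable_LIMSEQ_real[OF wiener_sum_tendsto[OF B _ t f f']] by measurable
qed

lemma exp_integrand_has_derivative:
  "((\<lambda>s. exp (\<mu> * (t - s))) has_real_derivative - \<mu> * exp (\<mu> * (t - s))) (at s within S)"
  by (auto intro!: derivative_eq_intros)

lemma wiener_int_exp_measurable:
  "std_bm M B \<Longrightarrow> t \<ge> 0 \<Longrightarrow> wiener_int (\<lambda>s. exp (\<mu> * (t - s))) B t \<in> borel_measurable M"
  by (rule wiener_int_measurable[OF _ _ exp_integrand_has_derivative]) (auto intro!: continuous_intros)

lemma wiener_int_at_0: "wiener_int f B 0 \<omega> = 0"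
  by (simp add: wiener_int_eq_lim wiener_sum_def riemann_stieltjes_sum_def)

lemma wiener_sum_normal:
  assumes M: "prob_space M" and B: "std_bm M B" and t: "t > 0" and n: "n > 0"
    and f: "\<And>s. s \<in> {0..t} \<Longrightarrow> f s \<noteq> 0" and c: "c \<noteq> 0"
  shows "distributed M lborel (\<lambda>\<omega>. c * wiener_sum f B t n \<omega>)
           (normal_density 0 (sqrt (c\<^sup>2 * wiener_sum_var f t n)))"
proof -
  interpret prob_space M by fact
  define ts where "ts i = t * real i / real n" for i
  have ts_mono: "strict_mono ts" unfolding strict_mono_def ts_def using t n
    by (auto simp: divide_strict_right_mono)
  have ts_step: "ts (Suc i) - ts i = t / real n" for i
    by (simp add: ts_def add_divide_distrib distrib_left)
  have indep: "indep_vars (\<lambda>_. borel) (\<lambda>i \<omega>. B (ts (Suc i)) \<omega> - B (ts i) \<omega>) UNIV"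
    using B ts_mono unfolding std_bm_def by (auto simp: ts_def)
  have incr: "distributed M lborel (\<lambda>\<omega>. B (ts (Suc i)) \<omega> - B (ts i) \<omega>)
                (normal_density 0 (sqrt (t / real n)))" for i
  proof -
    have "0 \<le> ts i" "ts i < ts (Suc i)"
      using ts_mono t by (auto simp: strict_mono_def ts_def simp del: of_nat_Suc)
    then show ?thesis using B ts_step[of i] unfolding std_bm_def by metis
  qed
  define a where "a i = c * f (ts i)" for i
  have a: "a i \<noteq> 0" if "i < n" for i
    using c f[of "ts i"] that t by (auto simp: a_def ts_def field_simps)
  define \<sigma> where "\<sigma> i = \<bar>a i\<bar> * sqrt (t / real n)" for i
  have "distributed M lborel (\<lambda>\<omega>. \<Sum>i<n. a i * (B (ts (Suc i)) \<omega> - B (ts i) \<omega>))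
          (normal_density (\<Sum>i<n. 0) (sqrt (\<Sum>i<n. (\<sigma> i)\<^sup>2)))"
  proof (rule sum_indep_normal)
    show "indep_vars (\<lambda>_. borel) (\<lambda>i \<omega>. a i * (B (ts (Suc i)) \<omega> - B (ts i) \<omega>)) {..<n}"
      using indep_vars_compose2[OF indep_vars_subset[OF indep subset_UNIV], of "{..<n}" "\<lambda>i x. a i * x"]
      by simp
    show "\<sigma> i > 0" if "i \<in> {..<n}" for i
      using a that t n by (simp add: \<sigma>_def)
    show "distributed M lborel (\<lambda>\<omega>. a i * (B (ts (Suc i)) \<omega> - B (ts i) \<omega>)) (normal_density 0 (\<sigma> i))"
      if "i \<in> {..<n}" for i
    proof -
      have ai: "a i \<noteq> 0" using a that by simp
      show ?thesis using normal_density_affine[OF incr[of i] _ ai, of 0] t n by (simp add: \<sigma>_def)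
    qed
  qed (use n in auto)
  moreover have "(\<lambda>\<omega>. \<Sum>i<n. a i * (B (ts (Suc i)) \<omega> - B (ts i) \<omega>)) = (\<lambda>\<omega>. c * wiener_sum f B t n \<omega>)"
    by (auto simp: wiener_sum_def riemann_stieltjes_sum_def a_def ts_def sum_distrib_left mult.assoc)
  moreover have "(\<Sum>i<n. (\<sigma> i)\<^sup>2) = c\<^sup>2 * wiener_sum_var f t n"
    using t n by (simp add: \<sigma>_def wiener_sum_var_def a_def ts_def sum_distrib_left power_mult_distrib mult.assoc)
  ultimately show ?thesis by simp
qed

lemma wiener_sum_var_pos:
  assumes t: "t > 0" and n: "n > 0" and f: "\<And>s. s \<in> {0..t} \<Longrightarrow> f s \<noteq> 0"
  shows "wiener_sum_var f t n > 0"
proof -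
  have "f (t * real i / real n) \<noteq> 0" if "i < n" for i
    using f that t by (simp add: field_simps)
  then show ?thesis
    unfolding wiener_sum_var_def using t n by (intro sum_pos) auto
qed

lemma sum_wiener_sums_normal:
  fixes w :: "'i \<Rightarrow> real \<Rightarrow> 'a \<Rightarrow> real"
  assumes M: "prob_space M" and bm: "\<And>k. k \<in> K \<Longrightarrow> std_bm M (w k)"
    and indep: "prob_space.indep_vars M (\<lambda>_. Pi\<^sub>M UNIV (\<lambda>_. borel)) (\<lambda>k \<omega> t. w k t \<omega>) K"
    and K: "finite K" "K \<noteq> {}" and t: "t > 0" and n: "n > 0"
    and f: "\<And>k s. k \<in> K \<Longrightarrow> s \<in> {0..t} \<Longrightarrow> f k s \<noteq> 0" and c: "\<And>k. k \<in> K \<Longrightarrow> c k \<noteq> 0"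
  shows "distributed M lborel (\<lambda>\<omega>. \<Sum>k\<in>K. c k * wiener_sum (f k) (w k) t n \<omega>)
           (normal_density 0 (sqrt (\<Sum>k\<in>K. (c k)\<^sup>2 * wiener_sum_var (f k) t n)))"
proof -
  interpret prob_space M by fact
  define Y where "Y k p = c k * riemann_stieltjes_sum (f k) p t n" for k p
  have "Y k \<in> borel_measurable (Pi\<^sub>M UNIV (\<lambda>_. borel))" for k
    unfolding Y_def riemann_stieltjes_sum_def by measurable
  then have "indep_vars (\<lambda>_. borel) (\<lambda>k \<omega>. Y k (\<lambda>t. w k t \<omega>)) K"
    using indep_vars_compose2[OF indep, of Y "\<lambda>_. borel"] by simp
  moreover have "(\<lambda>k \<omega>. Y k (\<lambda>t. w k t \<omega>)) = (\<lambda>k \<omega>. c k * wiener_sum (f k) (w k) t n \<omega>)"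
    by (simp add: Y_def wiener_sum_def fun_eq_iff)
  ultimately have indep_sums: "indep_vars (\<lambda>_. borel) (\<lambda>k \<omega>. c k * wiener_sum (f k) (w k) t n \<omega>) K"
    by simp
  have var_pos: "0 < (c k)\<^sup>2 * wiener_sum_var (f k) t n" if "k \<in> K" for k
    using wiener_sum_var_pos[OF t n f[OF that]] c[OF that] by simp
  have "distributed M lborel (\<lambda>\<omega>. c k * wiener_sum (f k) (w k) t n \<omega>)
          (normal_density 0 (sqrt ((c k)\<^sup>2 * wiener_sum_var (f k) t n)))" if "k \<in> K" for k
    by (rule wiener_sum_normal[OF M bm[OF that] t n f[OF that] c[OF that]])
  then have "distributed M lborel (\<lambda>\<omega>. \<Sum>k\<in>K. c k * wiener_sum (f k) (w k) t n \<omega>)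
      (normal_density (\<Sum>k\<in>K. 0) (sqrt (\<Sum>k\<in>K. (sqrt ((c k)\<^sup>2 * wiener_sum_var (f k) t n))\<^sup>2)))"
    using var_pos by (intro sum_indep_normal[OF K indep_sums]) auto
  moreover have "(\<Sum>k\<in>K. (sqrt ((c k)\<^sup>2 * wiener_sum_var (f k) t n))\<^sup>2)
                   = (\<Sum>k\<in>K. (c k)\<^sup>2 * wiener_sum_var (f k) t n)"
    using var_pos by (intro sum.cong) (auto intro: less_imp_le)
  ultimately show ?thesis by simp
qed

lemma nn_integral_normal_fourth_power:
  assumes X: "distributed M lborel X (normal_density 0 \<sigma>)" and \<sigma>: "\<sigma> > 0"
  shows "(\<integral>\<^sup>+\<omega>. ennreal ((X \<omega>)^4) \<partial>M) = ennreal (3 * \<sigma>^4)"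
proof -
  note moment = normal_moment_even[OF \<sigma>, of 0 2]
  have "(\<integral>\<^sup>+\<omega>. ennreal ((X \<omega>)^4) \<partial>M) = (\<integral>\<^sup>+x. normal_density 0 \<sigma> x * ennreal (x^4) \<partial>lborel)"
    using distributed_nn_integral[OF X, of "\<lambda>x. ennreal (x^4)"] by simp
  also have "\<dots> = (\<integral>\<^sup>+x. ennreal (normal_density 0 \<sigma> x * (x - 0)^(2*2)) \<partial>lborel)"
    by (simp add: ennreal_mult)
  also have "\<dots> = ennreal (integral\<^sup>L lborel (\<lambda>x. normal_density 0 \<sigma> x * (x - 0)^(2*2)))"
    using moment by (intro nn_integral_eq_integral) (auto simp: has_bochner_integral_iff)
  also have "integral\<^sup>L lborel (\<lambda>x. normal_density 0 \<sigma> x * (x - 0)^(2*2)) = fact (2 * 2) / ((2 / \<sigma>\<^sup>2)^2 * fact 2)"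
    using moment by (rule has_bochner_integral_integral_eq)
  also have "\<dots> = 3 * \<sigma>^4"
    using \<sigma> by (simp add: fact_numeral field_simps power2_eq_square power4_eq_xxxx)
  finally show ?thesis .
qed

lemma nn_integral_sum_wiener_sums_fourth_power_le:
  fixes w :: "'i \<Rightarrow> real \<Rightarrow> 'a \<Rightarrow> real"
  assumes M: "prob_space M" and bm: "\<And>k. k \<in> K \<Longrightarrow> std_bm M (w k)"
    and indep: "prob_space.indep_vars M (\<lambda>_. Pi\<^sub>M UNIV (\<lambda>_. borel)) (\<lambda>k \<omega> t. w k t \<omega>) K"
    and K: "finite K" and t: "t > 0" and n: "n > 0"
    and f: "\<And>k s. k \<in> K \<Longrightarrow> s \<in> {0..t} \<Longrightarrow> f k s \<noteq> 0"
    and V: "\<And>k. k \<in> K \<Longrightarrow> wiener_sum_var (f k) t n \<le> V k"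
  shows "(\<integral>\<^sup>+\<omega>. ennreal ((\<Sum>k\<in>K. c k * wiener_sum (f k) (w k) t n \<omega>)^4) \<partial>M)
           \<le> ennreal (3 * (\<Sum>k\<in>K. (c k)\<^sup>2 * V k)\<^sup>2)"
proof -
  define K' where "K' = {k\<in>K. c k \<noteq> 0}"
  have K': "finite K'" "K' \<subseteq> K" using K by (auto simp: K'_def)
  have sum_K': "(\<Sum>k\<in>K. c k * wiener_sum (f k) (w k) t n \<omega>) = (\<Sum>k\<in>K'. c k * wiener_sum (f k) (w k) t n \<omega>)" for \<omega>
    using K by (intro sum.mono_neutral_right) (auto simp: K'_def)
  show ?thesis
  proof (cases "K' = {}")
    case True
    then show ?thesis by (simp add: sum_K')
  next
    case False
    define \<sigma>2 where "\<sigma>2 = (\<Sum>k\<in>K'. (c k)\<^sup>2 * wiener_sum_var (f k) t n)"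
    have \<sigma>2_pos: "\<sigma>2 > 0"
      unfolding \<sigma>2_def using False K' wiener_sum_var_pos[OF t n f] by (intro sum_pos) (auto simp: K'_def)
    have "distributed M lborel (\<lambda>\<omega>. \<Sum>k\<in>K'. c k * wiener_sum (f k) (w k) t n \<omega>) (normal_density 0 (sqrt \<sigma>2))"
      unfolding \<sigma>2_def using False K' f bm prob_space.indep_vars_subset[OF M indep K'(2)]
      by (intro sum_wiener_sums_normal[OF M _ _ K'(1) _ t n]) (auto simp: K'_def)
    from nn_integral_normal_fourth_power[OF this]
    have "(\<integral>\<^sup>+\<omega>. ennreal ((\<Sum>k\<in>K. c k * wiener_sum (f k) (w k) t n \<omega>)^4) \<partial>M) = ennreal (3 * \<sigma>2\<^sup>2)"
      using \<sigma>2_pos by (simp add: sum_K' power4_eq_xxxx power2_eq_square)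
    moreover have "\<sigma>2 \<le> (\<Sum>k\<in>K. (c k)\<^sup>2 * V k)"
    proof -
      have "\<sigma>2 \<le> (\<Sum>k\<in>K'. (c k)\<^sup>2 * V k)"
        unfolding \<sigma>2_def using K' by (intro sum_mono mult_left_mono V) auto
      also have "\<dots> \<le> (\<Sum>k\<in>K. (c k)\<^sup>2 * V k)"
        using K K' order_trans[OF wiener_sum_var_nonneg[OF less_imp_le[OF t]] V] by (intro sum_mono2) auto
      finally show ?thesis .
    qed
    ultimately show ?thesis
      using \<sigma>2_pos by (simp add: ennreal_leI power_mono)
  qed
qed

lemma nn_integral_sum_wiener_int_fourth_power_le:
  fixes w :: "'i \<Rightarrow> real \<Rightarrow> 'a \<Rightarrow> real"
  assumes M: "prob_space M" and bm: "\<And>k. k \<in> K \<Longrightarrow> std_bm M (w k)"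
    and indep: "prob_space.indep_vars M (\<lambda>_. Pi\<^sub>M UNIV (\<lambda>_. borel)) (\<lambda>k \<omega> t. w k t \<omega>) K"
    and K: "finite K" and t: "t > 0"
    and f: "\<And>k s. k \<in> K \<Longrightarrow> s \<in> {0..t} \<Longrightarrow> f k s \<noteq> 0"
    and lim: "\<And>k \<omega>. k \<in> K \<Longrightarrow> \<omega> \<in> space M \<Longrightarrow>
                (\<lambda>n. wiener_sum (f k) (w k) t n \<omega>) \<longlonglongrightarrow> wiener_int (f k) (w k) t \<omega>"
    and V: "\<And>k n. k \<in> K \<Longrightarrow> n > 0 \<Longrightarrow> wiener_sum_var (f k) t n \<le> V k"
  shows "(\<integral>\<^sup>+\<omega>. ennreal ((\<Sum>k\<in>K. c k * wiener_int (f k) (w k) t \<omega>)^4) \<partial>M)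
           \<le> ennreal (3 * (\<Sum>k\<in>K. (c k)\<^sup>2 * V k)\<^sup>2)"
proof -
  define S where "S n \<omega> = (\<Sum>k\<in>K. c k * wiener_sum (f k) (w k) t n \<omega>)" for n \<omega>
  have "w k s \<in> borel_measurable M" if "k \<in> K" for k s
    using bm[OF that] by (simp add: std_bm_def)
  then have S_measurable: "S n \<in> borel_measurable M" for n
    unfolding S_def by (intro borel_measurable_sum borel_measurable_times wiener_sum_measurable) auto
  have S_lim: "(\<lambda>n. ennreal ((S n \<omega>)^4)) \<longlonglongrightarrow> ennreal ((\<Sum>k\<in>K. c k * wiener_int (f k) (w k) t \<omega>)^4)"
    if "\<omega> \<in> space M" for \<omega>
    unfolding S_def using that by (intro tendsto_ennrealI tendsto_power tendsto_sum tendsto_mult_left lim)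
  have S_moment: "(\<integral>\<^sup>+\<omega>. ennreal ((S n \<omega>)^4) \<partial>M) \<le> ennreal (3 * (\<Sum>k\<in>K. (c k)\<^sup>2 * V k)\<^sup>2)"
    if "n > 0" for n
    unfolding S_def using V that by (intro nn_integral_sum_wiener_sums_fourth_power_le[OF M bm indep K t that f])
  have "(\<integral>\<^sup>+\<omega>. ennreal ((\<Sum>k\<in>K. c k * wiener_int (f k) (w k) t \<omega>)^4) \<partial>M)
        = (\<integral>\<^sup>+\<omega>. liminf (\<lambda>n. ennreal ((S n \<omega>)^4)) \<partial>M)"
    by (intro nn_integral_cong) (simp add: lim_imp_Liminf[OF _ S_lim])
  also have "\<dots> \<le> liminf (\<lambda>n. \<integral>\<^sup>+\<omega>. ennreal ((S n \<omega>)^4) \<partial>M)"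
    by (intro nn_integral_liminf) (use S_measurable in measurable)
  also have "\<dots> \<le> liminf (\<lambda>n. ennreal (3 * (\<Sum>k\<in>K. (c k)\<^sup>2 * V k)\<^sup>2))"
    using S_moment by (intro Liminf_mono eventually_sequentiallyI[of 1]) auto
  also have "\<dots> = ennreal (3 * (\<Sum>k\<in>K. (c k)\<^sup>2 * V k)\<^sup>2)"
    by (simp add: Liminf_const)
  finally show ?thesis .
qed

section \<open>Variance of a single mode\<close>

lemma wiener_sum_var_exp_le_time:
  assumes t: "t > 0" and n: "n > 0"
  shows "wiener_sum_var (\<lambda>s. exp (\<mu> * (t - s))) t n \<le> t * exp (2 * max \<mu> 0 * t)"
proof -
  have "(exp (\<mu> * (t - t * real i / real n)))\<^sup>2 \<le> exp (2 * max \<mu> 0 * t)" if "i < n" for i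
  proof -
    have s: "0 \<le> t - t * real i / real n" "t - t * real i / real n \<le> t"
      using that t n by (auto simp: field_simps)
    have "\<mu> * (t - t * real i / real n) \<le> max \<mu> 0 * t"
      using s by (smt (verit) mult_left_mono mult_right_mono)
    then show ?thesis by (simp add: power2_eq_square flip: exp_add)
  qed
  then have "wiener_sum_var (\<lambda>s. exp (\<mu> * (t - s))) t n \<le> (\<Sum>i<n. exp (2 * max \<mu> 0 * t) * (t / real n))"
    unfolding wiener_sum_var_def using t by (intro sum_mono mult_right_mono) auto
  also have "\<dots> = t * exp (2 * max \<mu> 0 * t)" using n by simp
  finally show ?thesis .
qed

lemma wiener_sum_var_exp_le_inverse:
  assumes t: "t > 0" and n: "n > 0" and \<mu>: "\<mu> < 0"
  shows "wiener_sum_var (\<lambda>s. exp (\<mu> * (t - s))) t n \<le> 1 / (2 * (- \<mu>))"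
proof -
  \<comment> \<open>The terms form a geometric series in \<open>r = exp (- x)\<close>, and \<open>r / (1 - r) \<le> 1 / x\<close>.\<close>
  define x where "x = 2 * (- \<mu>) * (t / real n)"
  have x: "x > 0" unfolding x_def using \<mu> t n by (intro mult_pos_pos) auto
  define r where "r = exp (- x)"
  have r: "0 < r" "r < 1" using x by (auto simp: r_def)
  have "(exp (\<mu> * (t - t * real i / real n)))\<^sup>2 = r ^ (n - i)" if "i < n" for i
  proof -
    have "2 * (\<mu> * (t - t * real i / real n)) = real (n - i) * (- x)"
      using that n by (simp add: x_def of_nat_diff field_simps)
    then show ?thesis
      by (simp add: r_def power2_eq_square flip: exp_add exp_of_nat_mult)
  qed
  then have var_eq: "wiener_sum_var (\<lambda>s. exp (\<mu> * (t - s))) t n = (\<Sum>i<n. r ^ (n - i)) * (t / real n)"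
    unfolding wiener_sum_var_def sum_distrib_right by (intro sum.cong) auto
  have "(\<Sum>i<n. r ^ (n - i)) = r * (\<Sum>i<n. r ^ i)"
    by (subst sum.nat_diff_reindex[symmetric])
      (simp add: sum_distrib_left Suc_diff_Suc flip: power_Suc)
  also have "\<dots> \<le> r / (1 - r)"
    using r by (simp add: sum_gp_strict field_simps)
  also have "r / (1 - r) = 1 / (exp x - 1)"
    using x by (simp add: r_def exp_minus field_simps)
  also have "\<dots> \<le> 1 / x"
  proof (rule divide_left_mono)
    show "x \<le> exp x - 1" using exp_ge_add_one_self[of x] by linarith
  qed (use x in auto)
  finally have "wiener_sum_var (\<lambda>s. exp (\<mu> * (t - s))) t n \<le> 1 / x * (t / real n)"
    unfolding var_eq using t n by (intro mult_right_mono) auto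
  also have "\<dots> = 1 / (2 * (- \<mu>))"
    using t n \<mu> by (simp add: x_def)
  finally show ?thesis .
qed

lemma le_powr_interpolation:
  fixes a b v \<theta> :: real
  assumes "a > 0" "b > 0" "v \<le> a" "v \<le> b" "0 \<le> \<theta>" "\<theta> \<le> 1"
  shows "v \<le> a powr \<theta> * b powr (1 - \<theta>)"
proof -
  have "min a b = min a b powr \<theta> * min a b powr (1 - \<theta>)"
    using assms by (simp flip: powr_add)
  also have "\<dots> \<le> a powr \<theta> * b powr (1 - \<theta>)"
    using assms by (intro mult_mono powr_mono2) auto
  finally show ?thesis using assms by linarith
qed

text \<open>The constant absorbs the finitely many modes with \<open>q\<^sup>2 < 2 \<bar>\<nu>\<bar>\<close>, whose eigenvalue
  \<open>- q^4 - \<nu> q\<^sup>2\<close> may be positive, at most \<open>2 \<nu>\<^sup>2\<close>.\<close>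
definition variance_const :: "real \<Rightarrow> real" where
  "variance_const \<nu> = 1 + exp (4 * \<nu>\<^sup>2) * (1 + 2 * \<bar>\<nu>\<bar>)^4"

lemma variance_const_ge_1: "variance_const \<nu> \<ge> 1"
  unfolding variance_const_def by simp

lemma wiener_sum_var_exp_le_interpolated:
  assumes q: "q > 0" and t: "t > 0" and n: "n > 0" and \<theta>: "0 \<le> \<theta>" "\<theta> \<le> 1"
    and \<mu>: "\<mu> \<le> - (q^4 / 2)"
  shows "wiener_sum_var (\<lambda>s. exp (\<mu> * (t - s))) t n \<le> t powr \<theta> * q powr (- 4 * (1 - \<theta>))"
proof -
  define V where "V = wiener_sum_var (\<lambda>s. exp (\<mu> * (t - s))) t n"
  have \<mu>_neg: "\<mu> < 0" using \<mu> zero_less_power[OF q, of 4] by linarith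
  have "V \<le> t"
    using wiener_sum_var_exp_le_time[OF t n, of \<mu>] \<mu>_neg by (simp add: V_def)
  moreover have "V \<le> 1 / q^4"
  proof -
    have "V \<le> 1 / (2 * (- \<mu>))" unfolding V_def by (rule wiener_sum_var_exp_le_inverse[OF t n \<mu>_neg])
    also have "\<dots> \<le> 1 / q^4"
      using \<mu> mult_neg_pos[OF \<mu>_neg, of "q^4"] q by (intro divide_left_mono) auto
    finally show ?thesis .
  qed
  moreover have "q powr (- 4 * (1 - \<theta>)) = (1 / q^4) powr (1 - \<theta>)"
  proof -
    have "q powr (- 4 * (1 - \<theta>)) = (q powr (- 4)) powr (1 - \<theta>)" by (rule powr_powr[symmetric])
    also have "q powr (- 4) = 1 / q^4" using q by (simp add: powr_minus_divide powr_numeral)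
    finally show ?thesis .
  qed
  ultimately show ?thesis
    unfolding V_def using t q \<theta> by (simp add: le_powr_interpolation)
qed

lemma wiener_sum_var_exp_le_low_frequency:
  assumes q: "q > 0" and t: "0 < t" "t \<le> 1" and n: "n > 0" and \<theta>: "0 \<le> \<theta>" "\<theta> \<le> 1"
    and \<mu>: "\<mu> \<le> m" "0 \<le> m" and P: "1 \<le> P" "q \<le> P"
  shows "wiener_sum_var (\<lambda>s. exp (\<mu> * (t - s))) t n \<le> exp (2 * m) * P^4 * (t powr \<theta> * q powr (- 4 * (1 - \<theta>)))"
proof -
  have "max \<mu> 0 * t \<le> m" using \<mu> t mult_left_le[of t "max \<mu> 0"] by linarith
  then have "t * exp (2 * max \<mu> 0 * t) \<le> t * exp (2 * m)"
    using t by (intro mult_left_mono) auto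
  with wiener_sum_var_exp_le_time[OF t(1) n, of \<mu>]
  have "wiener_sum_var (\<lambda>s. exp (\<mu> * (t - s))) t n \<le> t * exp (2 * m)" by linarith
  also have "\<dots> \<le> t powr \<theta> * exp (2 * m)"
    using t \<theta> powr_mono'[of \<theta> 1 t] by (intro mult_right_mono) auto
  also have "\<dots> \<le> t powr \<theta> * exp (2 * m) * (P^4 * q powr (- 4 * (1 - \<theta>)))"
  proof -
    have "q powr (4 * (1 - \<theta>)) \<le> P powr 4"
      using q \<theta> P by (intro order_trans[OF powr_mono2 powr_mono]) auto
    moreover have "P powr 4 = P^4" using P by (simp add: powr_numeral)
    moreover have "1 = q powr (4 * (1 - \<theta>)) * q powr (- 4 * (1 - \<theta>))"
      using q by (simp flip: powr_add)
    ultimately have "1 \<le> P^4 * q powr (- 4 * (1 - \<theta>))"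
      by (metis mult_right_mono powr_ge_zero)
    then show ?thesis
      by (metis mult.right_neutral mult_left_mono powr_ge_zero exp_ge_zero zero_le_mult_iff)
  qed
  finally show ?thesis by (simp add: mult_ac)
qed

text \<open>Interpolating between the bounds \<open>t\<close> and \<open>q^(-4)\<close> trades time regularity
  \<open>t powr \<theta>\<close> for the spatial decay \<open>q powr (- 4 * (1 - \<theta>))\<close>.\<close>
lemma wiener_sum_var_eigen_le:
  assumes q: "q > 0" and t: "0 < t" "t \<le> 1" and n: "n > 0" and \<theta>: "0 \<le> \<theta>" "\<theta> \<le> 1"
  shows "wiener_sum_var (\<lambda>s. exp ((- (q^4) - \<nu> * q^2) * (t - s))) t n
           \<le> variance_const \<nu> * t powr \<theta> * q powr (- 4 * (1 - \<theta>))"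
proof -
  define \<mu> where "\<mu> = - (q^4) - \<nu> * q^2"
  define R where "R = t powr \<theta> * q powr (- 4 * (1 - \<theta>))"
  have R: "R \<ge> 0" by (simp add: R_def)
  have \<mu>_le: "\<mu> \<le> - (q^4) + \<bar>\<nu>\<bar> * q^2"
    unfolding \<mu>_def using mult_right_mono[of "- \<nu>" "\<bar>\<nu>\<bar>" "q^2"] by simp
  have "wiener_sum_var (\<lambda>s. exp (\<mu> * (t - s))) t n \<le> variance_const \<nu> * R"
  proof (cases "q^2 \<ge> 2 * \<bar>\<nu>\<bar>")
    case True
    then have "\<bar>\<nu>\<bar> * q^2 \<le> q^4 / 2"
      using mult_right_mono[of "\<bar>\<nu>\<bar>" "q^2 / 2" "q^2"] by (simp add: power2_eq_square power4_eq_xxxx)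
    then have "\<mu> \<le> - (q^4 / 2)" using \<mu>_le by linarith
    from wiener_sum_var_exp_le_interpolated[OF q t(1) n \<theta> this]
    show ?thesis
      using mult_right_mono[OF variance_const_ge_1 R, of \<nu>] by (simp add: R_def)
  next
    case False
    have "\<bar>\<nu>\<bar> * q^2 \<le> \<bar>\<nu>\<bar> * (2 * \<bar>\<nu>\<bar>)"
      using False by (intro mult_left_mono) auto
    moreover have "\<bar>\<nu>\<bar> * (2 * \<bar>\<nu>\<bar>) = 2 * \<nu>\<^sup>2"
      by (simp add: power2_eq_square abs_mult_self_eq)
    ultimately have "\<mu> \<le> 2 * \<nu>\<^sup>2"
      using \<mu>_le zero_le_power[of q 4] q by linarith
    moreover have "q \<le> 1 + 2 * \<bar>\<nu>\<bar>"
    proof (cases "q \<le> 1")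
      case False
      then have "q \<le> q^2" by (simp add: power2_eq_square)
      then show ?thesis using \<open>\<not> q^2 \<ge> 2 * \<bar>\<nu>\<bar>\<close> by linarith
    qed simp
    ultimately have "wiener_sum_var (\<lambda>s. exp (\<mu> * (t - s))) t n
                       \<le> exp (2 * (2 * \<nu>\<^sup>2)) * (1 + 2 * \<bar>\<nu>\<bar>)^4 * R"
      unfolding R_def by (intro wiener_sum_var_exp_le_low_frequency[OF q t n \<theta>]) auto
    also have "\<dots> \<le> variance_const \<nu> * R"
      using R by (intro mult_right_mono) (auto simp: variance_const_def)
    finally show ?thesis .
  qed
  then show ?thesis by (simp add: \<mu>_def R_def mult.assoc)
qed

section \<open>Dyadic chaining\<close>

definition dyadic_increments :: "(real \<Rightarrow> real) \<Rightarrow> real \<Rightarrow> nat \<Rightarrow> real" where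
  "dyadic_increments f L j = (\<Sum>i<2^j. (f (L * real (Suc i) / 2^j) - f (L * real i / 2^j))^4)"

definition dyadic_chain_bound :: "(real \<Rightarrow> real) \<Rightarrow> real \<Rightarrow> nat \<Rightarrow> real" where
  "dyadic_chain_bound f L m = \<bar>f 0\<bar> + (\<Sum>j\<le>m. root 4 (dyadic_increments f L j))"

lemma dyadic_increments_nonneg: "dyadic_increments f L j \<ge> 0"
  unfolding dyadic_increments_def by (intro sum_nonneg) (simp add: zero_le_even_power)

lemma abs_dyadic_increment_le:
  assumes "i < 2^j"
  shows "\<bar>f (L * real (Suc i) / 2^j) - f (L * real i / 2^j)\<bar> \<le> root 4 (dyadic_increments f L j)"
proof -
  have "(f (L * real (Suc i) / 2^j) - f (L * real i / 2^j))^4 \<le> dyadic_increments f L j"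
    unfolding dyadic_increments_def using assms by (intro member_le_sum) (auto simp: zero_le_even_power)
  then have "\<bar>f (L * real (Suc i) / 2^j) - f (L * real i / 2^j)\<bar>^4 \<le> dyadic_increments f L j"
    by (simp add: power_even_abs_numeral)
  then show ?thesis
    by (metis abs_ge_zero real_root_le_iff real_root_power_cancel zero_less_numeral)
qed

lemma abs_dyadic_point_le_chain_bound:
  "i \<le> 2^m \<Longrightarrow> \<bar>f (L * real i / 2^m)\<bar> \<le> dyadic_chain_bound f L m"
proof (induction m arbitrary: i)
  case 0
  then have "i \<le> 1" by simp
  then consider "i = 0" | "i = 1" by linarith
  then show ?case
  proof cases
    case 1
    then show ?thesis using dyadic_increments_nonneg[of f L 0] by (simp add: dyadic_chain_bound_def)
  next
    case 2
    then show ?thesis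
      using abs_dyadic_increment_le[of 0 0 f L] by (simp add: dyadic_chain_bound_def)
  qed
next
  case (Suc m)
  have step: "dyadic_chain_bound f L (Suc m) = dyadic_chain_bound f L m + root 4 (dyadic_increments f L (Suc m))"
    by (simp add: dyadic_chain_bound_def)
  have coarse: "f (L * real (2 * l) / 2^Suc m) = f (L * real l / 2^m)" for l
    by simp
  have root_nonneg: "0 \<le> root 4 (dyadic_increments f L (Suc m))"
    using dyadic_increments_nonneg by simp
  obtain l where "i = 2 * l \<or> i = Suc (2 * l)" by (metis oddE evenE Suc_eq_plus1)
  moreover have IH: "\<bar>f (L * real l / 2^m)\<bar> \<le> dyadic_chain_bound f L m"
    using calculation Suc.prems by (intro Suc.IH) auto
  ultimately show ?case
  proof (elim disjE)
    assume "i = 2 * l"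
    then have "f (L * real i / 2^Suc m) = f (L * real l / 2^m)" using coarse by simp
    then show ?thesis using IH root_nonneg step by linarith
  next
    assume i: "i = Suc (2 * l)"
    then have "\<bar>f (L * real i / 2^Suc m) - f (L * real (2 * l) / 2^Suc m)\<bar>
                 \<le> root 4 (dyadic_increments f L (Suc m))"
      using abs_dyadic_increment_le[of "2 * l" "Suc m" f L] Suc.prems by simp
    then show ?thesis
      using IH coarse[of l] step by linarith
  qed
qed

lemma ennreal_power_SUP_le:
  fixes f :: "'a \<Rightarrow> real"
  assumes "A \<noteq> {}" "bdd_above (f ` A)" "\<And>x. x \<in> A \<Longrightarrow> 0 \<le> f x"
    and le: "\<And>x. x \<in> A \<Longrightarrow> ennreal (f x ^ n) \<le> S" and n: "n > 0"
  shows "ennreal ((SUP x\<in>A. f x) ^ n) \<le> S"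
proof (cases S)
  case (real s)
  have "f x \<le> root n s" if "x \<in> A" for x
  proof -
    have "f x ^ n \<le> s" using le[OF that] real(2) by (simp add: real(1) ennreal_le_iff)
    then show ?thesis using assms(3)[OF that] n
      by (metis real_root_le_iff real_root_power_cancel)
  qed
  then have "(SUP x\<in>A. f x) ^ n \<le> root n s ^ n"
    using assms by (intro power_mono cSUP_least) (auto intro: order_trans[OF _ cSUP_upper])
  then show ?thesis using real n by (simp add: ennreal_leI)
qed simp

lemma dyadic_points_tendsto:
  assumes L: "L > 0" and x: "x \<in> {0..L}"
  obtains i :: "nat \<Rightarrow> nat" where "\<And>m. i m \<le> 2^m" and "(\<lambda>m. L * real (i m) / 2^m) \<longlonglongrightarrow> x"
proof
  define i where "i m = nat \<lfloor>x * 2^m / L\<rfloor>" for m :: nat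
  have i: "real (i m) = \<lfloor>x * 2^m / L\<rfloor>" for m
    unfolding i_def using x L by simp
  show "i m \<le> 2^m" for m
  proof -
    have "x * 2^m / L \<le> 2^m" using x L by (simp add: field_simps)
    then have "\<lfloor>x * 2^m / L\<rfloor> \<le> \<lfloor>(2::real)^m\<rfloor>" by (rule floor_mono)
    then show ?thesis unfolding i_def by (simp add: nat_le_iff)
  qed
  have lower: "\<forall>\<^sub>F m in sequentially. x - L / 2^m \<le> L * real (i m) / 2^m"
  proof (intro always_eventually allI)
    fix m :: nat
    have "x * 2^m / L - 1 \<le> real (i m)"
      using i[of m] real_of_int_floor_gt_diff_one[of "x * 2^m / L"] by linarith
    then have "x * 2^m - L \<le> L * real (i m)" using L by (simp add: field_simps)
    then have "(x * 2^m - L) / 2^m \<le> L * real (i m) / 2^m" by (intro divide_right_mono) auto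
    then show "x - L / 2^m \<le> L * real (i m) / 2^m" by (simp add: diff_divide_distrib)
  qed
  have upper: "\<forall>\<^sub>F m in sequentially. L * real (i m) / 2^m \<le> x"
  proof (intro always_eventually allI)
    fix m :: nat
    have "real (i m) \<le> x * 2^m / L"
      using i[of m] of_int_floor_le[of "x * 2^m / L"] by linarith
    then have "L * real (i m) \<le> x * 2^m" using L by (simp add: field_simps)
    then show "L * real (i m) / 2^m \<le> x" by (simp add: field_simps)
  qed
  have "(\<lambda>m. x - L / 2^m) \<longlonglongrightarrow> x"
    using tendsto_diff[OF tendsto_const LIMSEQ_divide_realpow_zero[of 2 L]] by simp
  then show "(\<lambda>m. L * real (i m) / 2^m) \<longlonglongrightarrow> x"
    by (rule real_tendsto_sandwich[OF lower upper _ tendsto_const])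
qed

lemma sup_power_le_SUP_dyadic_chain_bound:
  assumes L: "L > 0" and f: "continuous_on {0..L} f"
  shows "ennreal ((SUP x\<in>{0..L}. \<bar>f x\<bar>)^4) \<le> (SUP m. ennreal ((dyadic_chain_bound f L m)^4))"
proof (rule ennreal_power_SUP_le)
  show "bdd_above ((\<lambda>x. \<bar>f x\<bar>) ` {0..L})"
    by (intro bounded_imp_bdd_above compact_imp_bounded compact_continuous_image continuous_intros f) simp
  fix x assume x: "x \<in> {0..L}"
  obtain i where i: "\<And>m. i m \<le> 2^m" and lim: "(\<lambda>m. L * real (i m) / 2^m) \<longlonglongrightarrow> x"
    using dyadic_points_tendsto[OF L x] by blast
  have "(\<lambda>m. f (L * real (i m) / 2^m)) \<longlonglongrightarrow> f x"
    using i L by (intro continuous_on_tendsto_compose[OF f lim x] always_eventually) (auto simp: field_simps)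
  then have "(\<lambda>m. ennreal (\<bar>f (L * real (i m) / 2^m)\<bar>^4)) \<longlonglongrightarrow> ennreal (\<bar>f x\<bar>^4)"
    by (intro tendsto_ennrealI tendsto_power tendsto_rabs)
  moreover have "ennreal (\<bar>f (L * real (i m) / 2^m)\<bar>^4) \<le> (SUP m. ennreal ((dyadic_chain_bound f L m)^4))" for m
    using abs_dyadic_point_le_chain_bound[OF i[of m], of f L]
    by (intro order_trans[OF _ SUP_upper] ennreal_leI power_mono) auto
  ultimately show "ennreal (\<bar>f x\<bar>^4) \<le> (SUP m. ennreal ((dyadic_chain_bound f L m)^4))"
    by (blast intro: LIMSEQ_le_const2)
qed (use L in auto)

lemma power4_sum_le_weighted:
  fixes a w :: "'i \<Rightarrow> real"
  assumes I: "finite I" "I \<noteq> {}" and w: "\<And>i. i \<in> I \<Longrightarrow> w i > 0"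
  shows "(\<Sum>i\<in>I. a i)^4 \<le> (\<Sum>i\<in>I. w i)^3 * (\<Sum>i\<in>I. (a i)^4 / (w i)^3)"
proof -
  define W where "W = (\<Sum>i\<in>I. w i)"
  have W: "W > 0" unfolding W_def using I w by (intro sum_pos) auto
  have "(\<Sum>i\<in>I. (w i / W) *\<^sub>R (W * a i / w i))^4 \<le> (\<Sum>i\<in>I. (w i / W) * (W * a i / w i)^4)"
    by (rule convex_on_sum[OF I convex_power_even[of 4]])
       (use W w in \<open>auto simp: W_def sum_divide_distrib[symmetric] less_imp_le\<close>)
  moreover have "(\<Sum>i\<in>I. (w i / W) *\<^sub>R (W * a i / w i)) = (\<Sum>i\<in>I. a i)"
  proof (intro sum.cong refl)
    fix i assume "i \<in> I"
    then show "(w i / W) *\<^sub>R (W * a i / w i) = a i" using W w[of i] by simp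
  qed
  moreover have "(\<Sum>i\<in>I. (w i / W) * (W * a i / w i)^4) = W^3 * (\<Sum>i\<in>I. (a i)^4 / (w i)^3)"
    unfolding sum_distrib_left using W w
    by (intro sum.cong) (auto simp: field_simps power_mult_distrib power4_eq_xxxx power3_eq_cube)
  ultimately show ?thesis unfolding W_def by simp
qed

lemma sum_power_le_geometric_series:
  fixes \<rho> :: real
  assumes "0 < \<rho>" "\<rho> < 1"
  shows "(\<Sum>i\<le>n. \<rho>^i) \<le> 1 / (1 - \<rho>)"
proof -
  have "(\<Sum>i\<le>n. \<rho>^i) = (1 - \<rho>^Suc n) / (1 - \<rho>)"
    using assms sum_gp_strict[of \<rho> "Suc n"] by (simp add: lessThan_Suc_atMost)
  also have "\<dots> \<le> 1 / (1 - \<rho>)"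
    using assms by (intro divide_right_mono) auto
  finally show ?thesis .
qed

lemma power4_sum_le_geometric:
  fixes a :: "nat \<Rightarrow> real" and \<rho> :: real
  assumes \<rho>: "0 < \<rho>" "\<rho> < 1"
  shows "(\<Sum>i\<le>n. a i)^4 \<le> (1 / (1 - \<rho>))^3 * (\<Sum>i\<le>n. (a i)^4 / (\<rho>^i)^3)"
proof -
  have "(\<Sum>i\<le>n. a i)^4 \<le> (\<Sum>i\<le>n. \<rho>^i)^3 * (\<Sum>i\<le>n. (a i)^4 / (\<rho>^i)^3)"
    using \<rho> by (intro power4_sum_le_weighted) auto
  also have "\<dots> \<le> (1 / (1 - \<rho>))^3 * (\<Sum>i\<le>n. (a i)^4 / (\<rho>^i)^3)"
    using \<rho> sum_power_le_geometric_series[OF \<rho>, of n]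
    by (intro mult_right_mono power_mono sum_nonneg) (auto simp: zero_le_even_power)
  finally show ?thesis .
qed

lemma dyadic_chain_bound_power4_le:
  fixes \<rho> :: real
  assumes \<rho>: "0 < \<rho>" "\<rho> < 1"
  shows "(dyadic_chain_bound f L m)^4
           \<le> (1 / (1 - \<rho>))^3 * ((f 0)^4 + (\<Sum>j\<le>m. dyadic_increments f L j / (\<rho>^Suc j)^3))"
proof -
  define a where "a i = (if i = 0 then \<bar>f 0\<bar> else root 4 (dyadic_increments f L (i - 1)))" for i
  have "dyadic_chain_bound f L m = (\<Sum>i\<le>Suc m. a i)"
    unfolding dyadic_chain_bound_def sum.atMost_Suc_shift by (simp add: a_def)
  moreover have "(\<Sum>i\<le>Suc m. (a i)^4 / (\<rho>^i)^3)
                   = (f 0)^4 + (\<Sum>j\<le>m. dyadic_increments f L j / (\<rho>^Suc j)^3)"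
    unfolding sum.atMost_Suc_shift
    by (simp add: a_def dyadic_increments_nonneg power_even_abs_numeral)
  ultimately show ?thesis
    using power4_sum_le_geometric[OF \<rho>, of a "Suc m"] by simp
qed

text \<open>Level \<open>j\<close> of the dyadic chain gets weight \<open>\<rho>^j\<close> in Hoelder's inequality. Since its
  \<open>2^j\<close> increments each have fourth moment \<open>b (L / 2^j) powr (1 + \<beta>)\<close>, the choice
  \<open>\<rho>^4 = 2 powr (- \<beta>)\<close> makes the weighted levels a geometric series.\<close>
definition chain_ratio :: "real \<Rightarrow> real" where
  "chain_ratio \<beta> = 2 powr (- \<beta> / 4)"

definition kolmogorov_const :: "real \<Rightarrow> real \<Rightarrow> real" where
  "kolmogorov_const \<beta> L = (1 / (1 - chain_ratio \<beta>))^3 *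
     (1 + L powr (1 + \<beta>) * (1 / (1 - chain_ratio \<beta>)) / chain_ratio \<beta> ^ 3)"

lemma chain_ratio_pos: "chain_ratio \<beta> > 0"
  by (simp add: chain_ratio_def)

lemma chain_ratio_less_1: "\<beta> > 0 \<Longrightarrow> chain_ratio \<beta> < 1"
  using powr_less_mono[of "- \<beta> / 4" 0 2] by (simp add: chain_ratio_def)

lemma dyadic_scaling:
  assumes "L > 0"
  shows "2^j * (L / 2^j) powr (1 + \<beta>) = L powr (1 + \<beta>) * chain_ratio \<beta> ^ (4 * j)"
proof -
  have "(2::real)^j = 2 powr real j" by (simp add: powr_realpow)
  then have "2^j * (L / 2^j) powr (1 + \<beta>) = L powr (1 + \<beta>) * 2 powr (real j - real j * (1 + \<beta>))"
    using assms by (simp add: powr_divide powr_powr powr_diff)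
  also have "2 powr (real j - real j * (1 + \<beta>)) = chain_ratio \<beta> ^ (4 * j)"
    unfolding chain_ratio_def by (simp add: powr_power algebra_simps)
  finally show ?thesis .
qed

lemma nn_integral_dyadic_increments_le:
  assumes L: "L > 0" and b: "b \<ge> 0"
    and meas: "\<And>x. (\<lambda>\<omega>. F \<omega> x) \<in> borel_measurable M"
    and incr: "\<And>x y. x \<in> {0..L} \<Longrightarrow> y \<in> {0..L} \<Longrightarrow>
                 (\<integral>\<^sup>+\<omega>. ennreal ((F \<omega> x - F \<omega> y)^4) \<partial>M) \<le> ennreal (b * \<bar>x - y\<bar> powr (1 + \<beta>))"
  shows "(\<integral>\<^sup>+\<omega>. ennreal (dyadic_increments (F \<omega>) L j) \<partial>M)
           \<le> ennreal (b * L powr (1 + \<beta>) * chain_ratio \<beta> ^ (4 * j))"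
proof -
  define x where "x i = L * real i / 2^j" for i
  have "(\<integral>\<^sup>+\<omega>. ennreal (dyadic_increments (F \<omega>) L j) \<partial>M)
          = (\<integral>\<^sup>+\<omega>. (\<Sum>i<2^j. ennreal ((F \<omega> (x (Suc i)) - F \<omega> (x i))^4)) \<partial>M)"
    unfolding dyadic_increments_def x_def
    by (intro nn_integral_cong sum_ennreal[symmetric]) (simp add: zero_le_even_power)
  also have "\<dots> = (\<Sum>i<2^j. \<integral>\<^sup>+\<omega>. ennreal ((F \<omega> (x (Suc i)) - F \<omega> (x i))^4) \<partial>M)"
    using meas by (intro nn_integral_sum) auto
  also have "\<dots> \<le> (\<Sum>i<(2::nat)^j. ennreal (b * (L / 2^j) powr (1 + \<beta>)))"
  proof (intro sum_mono)
    fix i assume "i \<in> {..<(2::nat)^j}"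
    then have "real i < 2^j" "real (Suc i) \<le> 2^j"
      by (metis lessThan_iff of_nat_less_numeral_power_cancel_iff,
          metis lessThan_iff Suc_leI of_nat_le_numeral_power_cancel_iff)
    then have "L * real i \<le> L * 2^j" "L * real (Suc i) \<le> L * 2^j"
      using L by (auto intro!: mult_left_mono simp del: of_nat_Suc)
    then have "x i \<in> {0..L}" "x (Suc i) \<in> {0..L}" and "\<bar>x (Suc i) - x i\<bar> = L / 2^j"
      using L by (auto simp: x_def field_simps)
    then show "(\<integral>\<^sup>+\<omega>. ennreal ((F \<omega> (x (Suc i)) - F \<omega> (x i))^4) \<partial>M)
                 \<le> ennreal (b * (L / 2^j) powr (1 + \<beta>))"
      using incr[of "x (Suc i)" "x i"] by simp
  qed
  also have "\<dots> = ennreal (2^j * (b * (L / 2^j) powr (1 + \<beta>)))"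
    using b by (simp add: ennreal_mult' flip: ennreal_power)
  also have "2^j * (b * (L / 2^j) powr (1 + \<beta>)) = b * L powr (1 + \<beta>) * chain_ratio \<beta> ^ (4 * j)"
    using dyadic_scaling[OF L, of j \<beta>] by (simp add: mult_ac)
  finally show ?thesis .
qed

lemma incseq_dyadic_chain_bound: "incseq (dyadic_chain_bound f L)"
  by (rule incseq_SucI) (simp add: dyadic_chain_bound_def dyadic_increments_nonneg)

lemma dyadic_chain_bound_nonneg: "dyadic_chain_bound f L m \<ge> 0"
  unfolding dyadic_chain_bound_def
  by (intro add_nonneg_nonneg sum_nonneg) (simp_all add: dyadic_increments_nonneg)

lemma dyadic_increments_measurable:
  assumes "\<And>x. (\<lambda>\<omega>. F \<omega> x) \<in> borel_measurable M"
  shows "(\<lambda>\<omega>. dyadic_increments (F \<omega>) L j) \<in> borel_measurable M"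
  unfolding dyadic_increments_def
  by (intro borel_measurable_sum borel_measurable_power borel_measurable_diff assms)

lemma dyadic_chain_bound_measurable:
  assumes "\<And>x. (\<lambda>\<omega>. F \<omega> x) \<in> borel_measurable M"
  shows "(\<lambda>\<omega>. dyadic_chain_bound (F \<omega>) L m) \<in> borel_measurable M"
  unfolding dyadic_chain_bound_def
  by (intro borel_measurable_add borel_measurable_abs borel_measurable_sum assms
        measurable_compose[OF dyadic_increments_measurable borel_measurable_root])

lemma ennreal_dyadic_chain_bound_power4_le:
  fixes \<rho> :: real
  assumes \<rho>: "0 < \<rho>" "\<rho> < 1"
  shows "ennreal ((dyadic_chain_bound f L m)^4)
           \<le> ennreal ((1 / (1 - \<rho>))^3) * (ennreal ((f 0)^4)
                + (\<Sum>j\<le>m. ennreal (1 / (\<rho>^Suc j)^3) * ennreal (dyadic_increments f L j)))"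
proof -
  define S where "S = (\<Sum>j\<le>m. dyadic_increments f L j / (\<rho>^Suc j)^3)"
  have S: "S \<ge> 0" using \<rho> by (simp add: S_def sum_nonneg dyadic_increments_nonneg)
  have "ennreal ((dyadic_chain_bound f L m)^4) \<le> ennreal ((1 / (1 - \<rho>))^3 * ((f 0)^4 + S))"
    using dyadic_chain_bound_power4_le[OF \<rho>, of f L m] by (intro ennreal_leI) (simp add: S_def)
  also have "\<dots> = ennreal ((1 / (1 - \<rho>))^3) * (ennreal ((f 0)^4) + ennreal S)"
    using \<rho> S by (simp add: ennreal_mult' ennreal_plus zero_le_even_power)
  also have "ennreal S = (\<Sum>j\<le>m. ennreal (1 / (\<rho>^Suc j)^3) * ennreal (dyadic_increments f L j))"
    using \<rho> by (simp add: S_def dyadic_increments_nonneg flip: ennreal_mult)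
  finally show ?thesis .
qed

lemma chain_sum_le_kolmogorov_const:
  assumes \<beta>: "\<beta> > 0" and a: "a \<ge> 0" and b: "b \<ge> 0"
  defines "\<rho> \<equiv> chain_ratio \<beta>"
  shows "(1 / (1 - \<rho>))^3 * (a + (\<Sum>j\<le>m. 1 / (\<rho>^Suc j)^3 * (b * L powr (1 + \<beta>) * \<rho>^(4 * j))))
           \<le> kolmogorov_const \<beta> L * (a + b)"
proof -
  have \<rho>: "0 < \<rho>" "\<rho> < 1" using chain_ratio_pos chain_ratio_less_1[OF \<beta>] by (auto simp: \<rho>_def)
  define Q where "Q = L powr (1 + \<beta>) * (1 / (1 - \<rho>)) / \<rho>^3"
  have Q: "Q \<ge> 0" using \<rho> by (simp add: Q_def)
  have "1 / (\<rho>^Suc j)^3 * (b * L powr (1 + \<beta>) * \<rho>^(4 * j)) = b * L powr (1 + \<beta>) / \<rho>^3 * \<rho>^j" for j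
  proof -
    have "\<rho>^(4 * j) = \<rho>^j * \<rho>^(3 * j)" "(\<rho>^Suc j)^3 = \<rho>^3 * \<rho>^(3 * j)"
      by (simp_all add: power_mult_distrib ac_simps flip: power_add power_mult)
    then show ?thesis using \<rho> by simp
  qed
  then have "(\<Sum>j\<le>m. 1 / (\<rho>^Suc j)^3 * (b * L powr (1 + \<beta>) * \<rho>^(4 * j)))
               = b * L powr (1 + \<beta>) / \<rho>^3 * (\<Sum>j\<le>m. \<rho>^j)"
    by (simp add: sum_distrib_left)
  also have "\<dots> \<le> b * L powr (1 + \<beta>) / \<rho>^3 * (1 / (1 - \<rho>))"
    using sum_power_le_geometric_series[OF \<rho>, of m] \<rho> b by (intro mult_left_mono) auto
  also have "\<dots> = b * Q"
    by (simp add: Q_def)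
  also have "b * Q \<le> (1 + Q) * (a + b) - a"
    using a b Q by (simp add: algebra_simps)
  finally have "a + (\<Sum>j\<le>m. 1 / (\<rho>^Suc j)^3 * (b * L powr (1 + \<beta>) * \<rho>^(4 * j))) \<le> (1 + Q) * (a + b)"
    by linarith
  then show ?thesis
    using \<rho> unfolding kolmogorov_const_def Q_def \<rho>_def
    by (simp add: mult.assoc mult_left_mono)
qed

lemma nn_integral_dyadic_chain_bound_le:
  assumes \<beta>: "\<beta> > 0" and L: "L > 0" and a: "a \<ge> 0" and b: "b \<ge> 0"
    and meas: "\<And>x. (\<lambda>\<omega>. F \<omega> x) \<in> borel_measurable M"
    and start: "(\<integral>\<^sup>+\<omega>. ennreal ((F \<omega> 0)^4) \<partial>M) \<le> ennreal a"
    and incr: "\<And>x y. x \<in> {0..L} \<Longrightarrow> y \<in> {0..L} \<Longrightarrow>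
                 (\<integral>\<^sup>+\<omega>. ennreal ((F \<omega> x - F \<omega> y)^4) \<partial>M) \<le> ennreal (b * \<bar>x - y\<bar> powr (1 + \<beta>))"
  shows "(\<integral>\<^sup>+\<omega>. ennreal ((dyadic_chain_bound (F \<omega>) L m)^4) \<partial>M) \<le> ennreal (kolmogorov_const \<beta> L * (a + b))"
proof -
  define \<rho> where "\<rho> = chain_ratio \<beta>"
  have \<rho>: "0 < \<rho>" "\<rho> < 1" using chain_ratio_pos chain_ratio_less_1[OF \<beta>] by (auto simp: \<rho>_def)
  define c where "c j = 1 / (\<rho>^Suc j)^3" for j
  define h where "h j = b * L powr (1 + \<beta>) * \<rho>^(4 * j)" for j
  note meas [measurable] dyadic_increments_measurable[OF meas, measurable]
  have "(\<integral>\<^sup>+\<omega>. ennreal ((dyadic_chain_bound (F \<omega>) L m)^4) \<partial>M)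
      \<le> (\<integral>\<^sup>+\<omega>. ennreal ((1 / (1 - \<rho>))^3) * (ennreal ((F \<omega> 0)^4)
             + (\<Sum>j\<le>m. ennreal (c j) * ennreal (dyadic_increments (F \<omega>) L j))) \<partial>M)"
    unfolding c_def by (intro nn_integral_mono ennreal_dyadic_chain_bound_power4_le \<rho>)
  also have "\<dots> = ennreal ((1 / (1 - \<rho>))^3) * ((\<integral>\<^sup>+\<omega>. ennreal ((F \<omega> 0)^4) \<partial>M)
                     + (\<Sum>j\<le>m. ennreal (c j) * (\<integral>\<^sup>+\<omega>. ennreal (dyadic_increments (F \<omega>) L j) \<partial>M)))"
    by (simp add: nn_integral_cmult nn_integral_add nn_integral_sum)
  also have "\<dots> \<le> ennreal ((1 / (1 - \<rho>))^3) * (ennreal a + (\<Sum>j\<le>m. ennreal (c j) * ennreal (h j)))"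
    using nn_integral_dyadic_increments_le[OF L b meas incr] start
    by (intro mult_left_mono add_mono sum_mono) (auto simp: h_def \<rho>_def)
  also have "(\<Sum>j\<le>m. ennreal (c j) * ennreal (h j)) = ennreal (\<Sum>j\<le>m. c j * h j)"
    using \<rho> b by (simp add: c_def h_def sum_ennreal flip: ennreal_mult)
  also have "ennreal ((1 / (1 - \<rho>))^3) * (ennreal a + ennreal (\<Sum>j\<le>m. c j * h j))
               = ennreal ((1 / (1 - \<rho>))^3 * (a + (\<Sum>j\<le>m. c j * h j)))"
    using \<rho> a b by (simp add: c_def h_def ennreal_mult' ennreal_plus sum_nonneg)
  also have "\<dots> \<le> ennreal (kolmogorov_const \<beta> L * (a + b))"
    using chain_sum_le_kolmogorov_const[OF \<beta> a b, where m = m and L = L]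
    by (intro ennreal_leI) (simp add: c_def h_def \<rho>_def)
  finally show ?thesis .
qed

theorem nn_integral_sup_power4_le_kolmogorov:
  assumes \<beta>: "\<beta> > 0" and L: "L > 0" and a: "a \<ge> 0" and b: "b \<ge> 0"
    and cont: "\<And>\<omega>. \<omega> \<in> space M \<Longrightarrow> continuous_on {0..L} (F \<omega>)"
    and meas: "\<And>x. (\<lambda>\<omega>. F \<omega> x) \<in> borel_measurable M"
    and start: "(\<integral>\<^sup>+\<omega>. ennreal ((F \<omega> 0)^4) \<partial>M) \<le> ennreal a"
    and incr: "\<And>x y. x \<in> {0..L} \<Longrightarrow> y \<in> {0..L} \<Longrightarrow>
                 (\<integral>\<^sup>+\<omega>. ennreal ((F \<omega> x - F \<omega> y)^4) \<partial>M) \<le> ennreal (b * \<bar>x - y\<bar> powr (1 + \<beta>))"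
  shows "(\<integral>\<^sup>+\<omega>. ennreal ((SUP x\<in>{0..L}. \<bar>F \<omega> x\<bar>)^4) \<partial>M) \<le> ennreal (kolmogorov_const \<beta> L * (a + b))"
proof -
  have "(\<integral>\<^sup>+\<omega>. ennreal ((SUP x\<in>{0..L}. \<bar>F \<omega> x\<bar>)^4) \<partial>M)
          \<le> (\<integral>\<^sup>+\<omega>. (SUP m. ennreal ((dyadic_chain_bound (F \<omega>) L m)^4)) \<partial>M)"
    by (intro nn_integral_mono sup_power_le_SUP_dyadic_chain_bound[OF L cont])
  also have "\<dots> = (SUP m. \<integral>\<^sup>+\<omega>. ennreal ((dyadic_chain_bound (F \<omega>) L m)^4) \<partial>M)"
  proof (rule nn_integral_monotone_convergence_SUP)
    show "incseq (\<lambda>m \<omega>. ennreal ((dyadic_chain_bound (F \<omega>) L m)^4))"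
      using incseq_dyadic_chain_bound dyadic_chain_bound_nonneg
      by (auto simp: incseq_def le_fun_def intro!: ennreal_leI power_mono)
    show "(\<lambda>\<omega>. ennreal ((dyadic_chain_bound (F \<omega>) L m)^4)) \<in> borel_measurable M" for m
      using dyadic_chain_bound_measurable[OF meas] by measurable
  qed
  also have "\<dots> \<le> ennreal (kolmogorov_const \<beta> L * (a + b))"
    by (intro SUP_least nn_integral_dyadic_chain_bound_le[OF \<beta> L a b meas start incr])
  finally show ?thesis .
qed

section \<open>Fourier modes and their derivatives\<close>

definition fourier_mode_deriv :: "real \<Rightarrow> boundary_cond \<Rightarrow> nat \<Rightarrow> real \<Rightarrow> real" where
  "fourier_mode_deriv L bc k x = (case bc of
      Periodic \<Rightarrow> (if odd k then - (sqrt (2 / L) * fourier_freq L bc k * sin (fourier_freq L bc k * x))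
                   else sqrt (2 / L) * fourier_freq L bc k * cos (fourier_freq L bc k * x))
    | Neumann \<Rightarrow> - (sqrt (2 / L) * fourier_freq L bc k * sin (fourier_freq L bc k * x)))"

lemma fourier_mode_has_derivative:
  "((\<lambda>y. fourier_mode L bc k y) has_real_derivative fourier_mode_deriv L bc k x) (at x)"
  by (cases bc) (auto simp: fourier_mode_def fourier_mode_deriv_def intro!: derivative_eq_intros)

lemma continuous_on_fourier_mode_deriv: "continuous_on S (fourier_mode_deriv L bc k)"
  by (cases bc; cases "odd k") (auto simp: fourier_mode_deriv_def intro!: continuous_intros)

lemma abs_sin_diff_le: "\<bar>sin a - sin b\<bar> \<le> \<bar>a - b :: real\<bar>"
  using field_differentiable_bound[of UNIV sin cos 1 a b]
  by (auto intro!: derivative_eq_intros)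

lemma abs_cos_diff_le: "\<bar>cos a - cos b\<bar> \<le> \<bar>a - b :: real\<bar>"
  using field_differentiable_bound[of UNIV cos "\<lambda>x. - sin x" 1 a b]
  by (auto intro!: derivative_eq_intros)

lemma fourier_mode_deriv_eq:
  obtains T :: "real \<Rightarrow> real" where "\<And>z. \<bar>T z\<bar> \<le> 1" and "\<And>a b. \<bar>T a - T b\<bar> \<le> \<bar>a - b\<bar>"
    and "\<And>x. fourier_mode_deriv L bc k x = sqrt (2 / L) * fourier_freq L bc k * T (fourier_freq L bc k * x)"
proof -
  define q where "q = fourier_freq L bc k"
  consider "\<And>x. fourier_mode_deriv L bc k x = sqrt (2 / L) * q * (\<lambda>z. - sin z) (q * x)"
    | "\<And>x. fourier_mode_deriv L bc k x = sqrt (2 / L) * q * cos (q * x)"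
    by (cases bc; cases "odd k") (auto simp: fourier_mode_deriv_def q_def)
  then show ?thesis
  proof cases
    case 1
    then show ?thesis
      using that[of "\<lambda>z. - sin z"] abs_sin_diff_le by (simp add: q_def abs_minus_commute)
  next
    case 2
    then show ?thesis
      using that[of cos] abs_cos_diff_le by (simp add: q_def)
  qed
qed

lemma fourier_freq_ge:
  assumes "L > 0"
  shows "fourier_freq L bc k \<ge> pi * real k / L"
proof (cases bc)
  case Periodic
  have "pi * real k \<le> pi * (2 * real ((k + 1) div 2))"
    using pi_gt_zero by (intro mult_left_mono) linarith+
  then show ?thesis using Periodic assms pi_gt_zero by (simp add: fourier_freq_def divide_right_mono mult.assoc)
qed (simp add: fourier_freq_def)

lemma fourier_freq_pos:
  assumes "L > 0" "k \<ge> 1"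
  shows "fourier_freq L bc k > 0"
proof -
  have "pi * real k / L > 0" using assms by simp
  then show ?thesis using fourier_freq_ge[OF assms(1)] by (rule less_le_trans)
qed

lemma fourier_mode_deriv_sq_le:
  assumes "L > 0" "k \<ge> 1"
  shows "(fourier_mode_deriv L bc k x)\<^sup>2 \<le> 2 / L * fourier_freq L bc k powr 2"
proof -
  obtain T where T: "\<And>z. \<bar>T z\<bar> \<le> 1" and "\<And>a b. \<bar>T a - T b\<bar> \<le> \<bar>a - b\<bar>"
    and d: "\<And>x. fourier_mode_deriv L bc k x = sqrt (2 / L) * fourier_freq L bc k * T (fourier_freq L bc k * x)"
    by (rule fourier_mode_deriv_eq, rule that)
  define q where "q = fourier_freq L bc k"
  have q: "q > 0" using fourier_freq_pos[OF assms] by (simp add: q_def)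
  note d = d[folded q_def]
  have "(T (q * x))\<^sup>2 \<le> 1"
    using power_le_one[OF abs_ge_zero T[of "q * x"], of 2] by simp
  have "(fourier_mode_deriv L bc k x)\<^sup>2 = 2 / L * q\<^sup>2 * (T (q * x))\<^sup>2"
    using assms by (simp add: d power_mult_distrib)
  also have "\<dots> \<le> 2 / L * q\<^sup>2 * 1"
    using assms \<open>(T (q * x))\<^sup>2 \<le> 1\<close> by (intro mult_left_mono) auto
  finally show ?thesis using q by (simp add: q_def powr_numeral)
qed

lemma min_sq_le_powr:
  fixes u \<theta> :: real
  assumes "u \<ge> 0" "0 \<le> \<theta>" "\<theta> \<le> 2"
  shows "(min u 2)\<^sup>2 \<le> 4 * u powr \<theta>"
proof (cases "u \<le> 2")
  case True
  show ?thesis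
  proof (cases "u = 0")
    case False
    then have "u\<^sup>2 = u powr \<theta> * u powr (2 - \<theta>)"
      using assms by (simp flip: powr_add)
    also have "\<dots> \<le> u powr \<theta> * 2 powr (2 - \<theta>)"
      using assms True by (intro mult_left_mono powr_mono2) auto
    also have "\<dots> \<le> u powr \<theta> * 4"
      using assms powr_mono[of "2 - \<theta>" 2 2] by (intro mult_left_mono) auto
    finally show ?thesis using True by (simp add: mult.commute)
  qed simp
next
  case False
  then show ?thesis using ge_one_powr_ge_zero[of u \<theta>] assms by simp
qed

lemma fourier_mode_deriv_diff_sq_le:
  assumes "L > 0" "k \<ge> 1" "0 \<le> \<theta>" "\<theta> \<le> 2"
  shows "(fourier_mode_deriv L bc k x - fourier_mode_deriv L bc k y)\<^sup>2
           \<le> 8 / L * \<bar>x - y\<bar> powr \<theta> * fourier_freq L bc k powr (2 + \<theta>)"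
proof -
  define q where "q = fourier_freq L bc k"
  obtain T where T: "\<And>z. \<bar>T z\<bar> \<le> 1" and T_lip: "\<And>a b. \<bar>T a - T b\<bar> \<le> \<bar>a - b\<bar>"
    and d: "\<And>x. fourier_mode_deriv L bc k x = sqrt (2 / L) * fourier_freq L bc k * T (fourier_freq L bc k * x)"
    by (rule fourier_mode_deriv_eq, rule that)
  have q: "q > 0" using fourier_freq_pos[OF assms(1,2)] by (simp add: q_def)
  note d = d[folded q_def]
  have "\<bar>T (q * x) - T (q * y)\<bar> \<le> 2"
    using abs_triangle_ineq4[of "T (q * x)" "T (q * y)"] T[of "q * x"] T[of "q * y"] by linarith
  with T_lip[of "q * x" "q * y"] have "\<bar>T (q * x) - T (q * y)\<bar> \<le> min (q * \<bar>x - y\<bar>) 2"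
    using q by (simp add: abs_mult flip: right_diff_distrib)
  then have "(T (q * x) - T (q * y))\<^sup>2 \<le> (min (q * \<bar>x - y\<bar>) 2)\<^sup>2"
    using power_mono[of "\<bar>T (q * x) - T (q * y)\<bar>" _ 2] by simp
  also have "\<dots> \<le> 4 * (q * \<bar>x - y\<bar>) powr \<theta>"
    using q assms by (intro min_sq_le_powr) auto
  finally have T_diff: "(T (q * x) - T (q * y))\<^sup>2 \<le> 4 * (q * \<bar>x - y\<bar>) powr \<theta>" .
  have "(fourier_mode_deriv L bc k x - fourier_mode_deriv L bc k y)\<^sup>2
          = 2 / L * q\<^sup>2 * (T (q * x) - T (q * y))\<^sup>2"
    using assms by (simp add: d power_mult_distrib flip: right_diff_distrib)
  also have "\<dots> \<le> 2 / L * q\<^sup>2 * (4 * (q * \<bar>x - y\<bar>) powr \<theta>)"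
    using assms T_diff by (intro mult_left_mono) auto
  also have "\<dots> = 8 / L * \<bar>x - y\<bar> powr \<theta> * (q powr 2 * q powr \<theta>)"
    using q by (simp add: powr_mult powr_numeral)
  also have "q powr 2 * q powr \<theta> = q powr (2 + \<theta>)"
    by (rule powr_add[symmetric])
  finally show ?thesis by (simp add: q_def)
qed

definition scaled_zeta :: "real \<Rightarrow> real \<Rightarrow> real" where
  "scaled_zeta L s = (pi / L) powr (- s) * (\<Sum>k. real k powr (- s))"

lemma sum_fourier_freq_powr_le:
  assumes L: "L > 0" and s: "s > 1"
  shows "(\<Sum>k=1..N. fourier_freq L bc k powr (- s)) \<le> scaled_zeta L s"
proof -
  have "(\<Sum>k=1..N. fourier_freq L bc k powr (- s)) \<le> (\<Sum>k=1..N. (pi / L) powr (- s) * real k powr (- s))"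
  proof (rule sum_mono)
    fix k assume "k \<in> {1..N}"
    then have "pi * real k / L > 0" using L by simp
    then have "fourier_freq L bc k powr (- s) \<le> (pi * real k / L) powr (- s)"
      using s fourier_freq_ge[OF L] by (intro powr_mono2') auto
    also have "\<dots> = (pi / L) powr (- s) * real k powr (- s)"
      using L by (simp add: powr_mult flip: times_divide_eq_left)
    finally show "fourier_freq L bc k powr (- s) \<le> (pi / L) powr (- s) * real k powr (- s)" .
  qed
  also have "\<dots> \<le> (pi / L) powr (- s) * (\<Sum>k. real k powr (- s))"
    using s by (auto simp: sum_distrib_left[symmetric] summable_real_powr_iff
        intro!: mult_left_mono sum_le_suminf)
  finally show ?thesis unfolding scaled_zeta_def .
qed

lemma sum_mode_variance_le:
  assumes L: "L > 0" and \<alpha>: "\<forall>k\<ge>1. \<bar>\<alpha> k\<bar> \<le> K" and G: "G \<ge> 0" and e: "e < 3/4"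
    and d: "\<And>k. k \<ge> 1 \<Longrightarrow> (d k)\<^sup>2 \<le> G * fourier_freq L bc k powr (2 + e)"
  shows "(\<Sum>k=1..N. (\<alpha> k * d k)\<^sup>2 * (variance_const \<nu> * t powr (1/16) * fourier_freq L bc k powr (-15/4)))
           \<le> K\<^sup>2 * G * variance_const \<nu> * scaled_zeta L (7/4 - e) * t powr (1/16)"
proof -
  define C where "C = K\<^sup>2 * G * variance_const \<nu> * t powr (1/16)"
  have "(\<alpha> k * d k)\<^sup>2 * (variance_const \<nu> * t powr (1/16) * fourier_freq L bc k powr (-15/4))
          \<le> C * fourier_freq L bc k powr (- (7/4 - e))" if "k \<in> {1..N}" for k
  proof -
    define q where "q = fourier_freq L bc k"
    have q: "q > 0" using fourier_freq_pos[OF L] that by (simp add: q_def)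
    have "(\<alpha> k)\<^sup>2 \<le> K\<^sup>2"
      using \<alpha> that power_mono[of "\<bar>\<alpha> k\<bar>" K 2] by simp
    then have "(\<alpha> k * d k)\<^sup>2 \<le> K\<^sup>2 * (G * q powr (2 + e))"
      using d[of k] that by (simp add: q_def power_mult_distrib mult_mono')
    then have "(\<alpha> k * d k)\<^sup>2 * (variance_const \<nu> * t powr (1/16) * q powr (-15/4))
                 \<le> K\<^sup>2 * (G * q powr (2 + e)) * (variance_const \<nu> * t powr (1/16) * q powr (-15/4))"
      using variance_const_ge_1[of \<nu>] by (intro mult_right_mono) auto
    also have "\<dots> = C * (q powr (2 + e) * q powr (-15/4))"
      by (simp add: C_def mult_ac)
    also have "q powr (2 + e) * q powr (-15/4) = q powr (- (7/4 - e))"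
      by (simp flip: powr_add)
    finally show ?thesis by (simp add: q_def)
  qed
  then have "(\<Sum>k=1..N. (\<alpha> k * d k)\<^sup>2 * (variance_const \<nu> * t powr (1/16) * fourier_freq L bc k powr (-15/4)))
               \<le> C * (\<Sum>k=1..N. fourier_freq L bc k powr (- (7/4 - e)))"
    unfolding sum_distrib_left by (rule sum_mono)
  also have "\<dots> \<le> C * scaled_zeta L (7/4 - e)"
    using e G variance_const_ge_1[of \<nu>] by (intro mult_left_mono sum_fourier_freq_powr_le L) (auto simp: C_def)
  finally show ?thesis by (simp add: C_def mult_ac)
qed

section \<open>Fourth moments of the derivative of the stochastic convolution\<close>

lemma nn_integral_mode_sum_power4_le:
  fixes w :: "nat \<Rightarrow> real \<Rightarrow> 'a \<Rightarrow> real"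
  assumes M: "prob_space M" and L: "L > 0"
    and bm: "\<forall>k\<ge>1. std_bm M (w k)"
    and indep: "prob_space.indep_vars M (\<lambda>_. Pi\<^sub>M UNIV (\<lambda>_. borel)) (\<lambda>k \<omega> t. w k t \<omega>) {1..}"
    and \<alpha>: "\<forall>k\<ge>1. \<bar>\<alpha> k\<bar> \<le> K" and t: "0 \<le> t" "t \<le> 1" and G: "G \<ge> 0" and e: "e < 3/4"
    and d: "\<And>k. k \<ge> 1 \<Longrightarrow> (d k)\<^sup>2 \<le> G * fourier_freq L bc k powr (2 + e)"
  shows "(\<integral>\<^sup>+\<omega>. ennreal ((\<Sum>k=1..N. \<alpha> k * d k *
             wiener_int (\<lambda>s. exp (A_eigenvalue L \<nu> bc k * (t - s))) (w k) t \<omega>)^4) \<partial>M)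
           \<le> ennreal (3 * (K\<^sup>2 * variance_const \<nu> * scaled_zeta L (7/4 - e))\<^sup>2 * G\<^sup>2 * t powr (1/8))"
proof (cases "t = 0")
  case True
  then show ?thesis by (simp add: wiener_int_at_0)
next
  case False
  then have t_pos: "t > 0" using t by simp
  define V where "V k = variance_const \<nu> * t powr (1/16) * fourier_freq L bc k powr (-15/4)" for k
  define S where "S = (\<Sum>k=1..N. (\<alpha> k * d k)\<^sup>2 * V k)"
  have "(\<integral>\<^sup>+\<omega>. ennreal ((\<Sum>k=1..N. \<alpha> k * d k *
             wiener_int (\<lambda>s. exp (A_eigenvalue L \<nu> bc k * (t - s))) (w k) t \<omega>)^4) \<partial>M)
        \<le> ennreal (3 * S\<^sup>2)"
    unfolding S_def
  proof (rule nn_integral_sum_wiener_int_fourth_power_le[OF M _ _ _ t_pos])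
    show "prob_space.indep_vars M (\<lambda>_. Pi\<^sub>M UNIV (\<lambda>_. borel)) (\<lambda>k \<omega> t. w k t \<omega>) {1..N}"
      by (rule prob_space.indep_vars_subset[OF M indep]) auto
    show "(\<lambda>n. wiener_sum (\<lambda>s. exp (A_eigenvalue L \<nu> bc k * (t - s))) (w k) t n \<omega>)
            \<longlonglongrightarrow> wiener_int (\<lambda>s. exp (A_eigenvalue L \<nu> bc k * (t - s))) (w k) t \<omega>"
      if "k \<in> {1..N}" "\<omega> \<in> space M" for k \<omega>
      using bm that t
      by (intro wiener_sum_tendsto[OF _ _ _ exp_integrand_has_derivative]) (auto intro!: continuous_intros)
    show "wiener_sum_var (\<lambda>s. exp (A_eigenvalue L \<nu> bc k * (t - s))) t n \<le> V k"
      if "k \<in> {1..N}" "n > 0" for k n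
    proof -
      have "fourier_freq L bc k > 0" using fourier_freq_pos[OF L] that by simp
      from wiener_sum_var_eigen_le[OF this t_pos t(2) \<open>n > 0\<close>, where \<theta> = "1/16" and \<nu> = \<nu>]
      show ?thesis by (simp add: A_eigenvalue_def V_def)
    qed
  qed (use bm in auto)
  also have "\<dots> \<le> ennreal (3 * (K\<^sup>2 * G * variance_const \<nu> * scaled_zeta L (7/4 - e) * t powr (1/16))\<^sup>2)"
  proof -
    have "S \<le> K\<^sup>2 * G * variance_const \<nu> * scaled_zeta L (7/4 - e) * t powr (1/16)"
      unfolding S_def V_def by (rule sum_mode_variance_le[OF L \<alpha> G e d])
    moreover have "S \<ge> 0"
      unfolding S_def V_def using variance_const_ge_1[of \<nu>] by (intro sum_nonneg) auto
    ultimately show ?thesis by (intro ennreal_leI mult_left_mono power_mono) auto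
  qed
  also have "(K\<^sup>2 * G * variance_const \<nu> * scaled_zeta L (7/4 - e) * t powr (1/16))\<^sup>2
      = (K\<^sup>2 * variance_const \<nu> * scaled_zeta L (7/4 - e))\<^sup>2 * G\<^sup>2 * t powr (1/8)"
    by (simp add: power_mult_distrib power2_eq_square mult_ac flip: powr_add)
  finally show ?thesis by (simp add: mult.assoc)
qed

text \<open>With \<open>\<theta> = 1/16\<close> each mode has variance at most \<open>C t powr (1/16) q powr (-15/4)\<close>.
  The derivative contributes \<open>q\<^sup>2\<close> at a point and \<open>q powr (2 + 5/8) \<bar>x - y\<bar> powr (5/8)\<close> for an
  increment, leaving the convergent series of \<open>q powr (-7/4)\<close> and \<open>q powr (-9/8)\<close>; the fourth
  moments of the increments then scale like \<open>\<bar>x - y\<bar> powr (1 + 1/4)\<close>.\<close>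
definition stoch_conv_deriv_const :: "real \<Rightarrow> real \<Rightarrow> real \<Rightarrow> real" where
  "stoch_conv_deriv_const L \<nu> K = kolmogorov_const (1/4) L *
     (3 * (K\<^sup>2 * variance_const \<nu> * scaled_zeta L (7/4))\<^sup>2 * (2 / L)\<^sup>2
      + 3 * (K\<^sup>2 * variance_const \<nu> * scaled_zeta L (9/8))\<^sup>2 * (8 / L)\<^sup>2)"

lemma deriv_stoch_conv:
  "deriv (\<lambda>y. stoch_conv L \<nu> bc \<alpha> w N t y \<omega>) x =
     (\<Sum>k=1..N. \<alpha> k * fourier_mode_deriv L bc k x *
        wiener_int (\<lambda>s. exp (A_eigenvalue L \<nu> bc k * (t - s))) (w k) t \<omega>)"
  unfolding stoch_conv_def
  by (intro DERIV_imp_deriv DERIV_sum DERIV_cmult_right DERIV_cmult fourier_mode_has_derivative)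

lemma nn_integral_sup_deriv_stoch_conv_le:
  fixes w :: "nat \<Rightarrow> real \<Rightarrow> 'a \<Rightarrow> real"
  assumes M: "prob_space M" and L: "L > 0"
    and bm: "\<forall>k\<ge>1. std_bm M (w k)"
    and indep: "prob_space.indep_vars M (\<lambda>_. Pi\<^sub>M UNIV (\<lambda>_. borel)) (\<lambda>k \<omega> t. w k t \<omega>) {1..}"
    and K: "\<forall>k\<ge>1. \<bar>\<alpha> k\<bar> \<le> K" and t: "0 \<le> t" "t \<le> 1"
  shows "(\<integral>\<^sup>+\<omega>. ennreal ((SUP x\<in>{0..L}. \<bar>deriv (\<lambda>y. stoch_conv L \<nu> bc \<alpha> w N t y \<omega>) x\<bar>)^4) \<partial>M)
           \<le> ennreal (stoch_conv_deriv_const L \<nu> K * t powr (1/8))"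
proof -
  define Z where "Z k = wiener_int (\<lambda>s. exp (A_eigenvalue L \<nu> bc k * (t - s))) (w k) t" for k
  define F where "F \<omega> x = (\<Sum>k=1..N. \<alpha> k * fourier_mode_deriv L bc k x * Z k \<omega>)" for \<omega> x
  note mode_moment = nn_integral_mode_sum_power4_le[OF M L bm indep K t, where \<nu> = \<nu> and N = N and bc = bc,
      folded Z_def]
  have "(fourier_mode_deriv L bc k 0)\<^sup>2 \<le> 2 / L * fourier_freq L bc k powr (2 + 0)" if "k \<ge> 1" for k
    using fourier_mode_deriv_sq_le[OF L that] by simp
  then have start: "(\<integral>\<^sup>+\<omega>. ennreal ((F \<omega> 0)^4) \<partial>M)
      \<le> ennreal (3 * (K\<^sup>2 * variance_const \<nu> * scaled_zeta L (7/4))\<^sup>2 * (2 / L)\<^sup>2 * t powr (1/8))"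
    using mode_moment[of "2 / L" 0] L by (simp add: F_def)
  have incr: "(\<integral>\<^sup>+\<omega>. ennreal ((F \<omega> x - F \<omega> y)^4) \<partial>M)
      \<le> ennreal (3 * (K\<^sup>2 * variance_const \<nu> * scaled_zeta L (9/8))\<^sup>2 * (8 / L)\<^sup>2 * t powr (1/8)
                 * \<bar>x - y\<bar> powr (1 + 1/4))" for x y
  proof -
    have F_diff: "F \<omega> x - F \<omega> y
        = (\<Sum>k=1..N. \<alpha> k * (fourier_mode_deriv L bc k x - fourier_mode_deriv L bc k y) * Z k \<omega>)" for \<omega>
      by (simp add: F_def algebra_simps flip: sum_subtractf)
    have "(fourier_mode_deriv L bc k x - fourier_mode_deriv L bc k y)\<^sup>2
        \<le> 8 / L * \<bar>x - y\<bar> powr (5/8) * fourier_freq L bc k powr (2 + 5/8)" if "k \<ge> 1" for k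
      using fourier_mode_deriv_diff_sq_le[OF L that, of "5/8"] by simp
    then have "(\<integral>\<^sup>+\<omega>. ennreal ((F \<omega> x - F \<omega> y)^4) \<partial>M)
        \<le> ennreal (3 * (K\<^sup>2 * variance_const \<nu> * scaled_zeta L (7/4 - 5/8))\<^sup>2
                   * (8 / L * \<bar>x - y\<bar> powr (5/8))\<^sup>2 * t powr (1/8))"
      unfolding F_diff using L by (intro mode_moment) auto
    also have "(8 / L * \<bar>x - y\<bar> powr (5/8))\<^sup>2 = (8 / L)\<^sup>2 * \<bar>x - y\<bar> powr (1 + 1/4)"
      by (simp add: power_mult_distrib power2_eq_square flip: powr_add)
    finally show ?thesis by (simp add: mult_ac)
  qed
  have cont: "continuous_on {0..L} (F \<omega>)" for \<omega>
    unfolding F_def by (intro continuous_intros continuous_on_fourier_mode_deriv)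
  have meas: "(\<lambda>\<omega>. F \<omega> x) \<in> borel_measurable M" for x
    unfolding F_def Z_def using bm t
    by (auto intro!: borel_measurable_sum borel_measurable_times wiener_int_exp_measurable)
  have "(\<integral>\<^sup>+\<omega>. ennreal ((SUP x\<in>{0..L}. \<bar>F \<omega> x\<bar>)^4) \<partial>M)
      \<le> ennreal (stoch_conv_deriv_const L \<nu> K * t powr (1/8))"
    using nn_integral_sup_power4_le_kolmogorov[OF _ L _ _ cont meas start incr]
    by (simp add: stoch_conv_deriv_const_def algebra_simps)
  moreover have "deriv (\<lambda>y. stoch_conv L \<nu> bc \<alpha> w N t y \<omega>) x = F \<omega> x" for \<omega> x
    by (simp add: deriv_stoch_conv F_def Z_def)
  ultimately show ?thesis by simp
qed

theorem lemma2:
  fixes L \<nu> :: real and bc :: boundary_cond and \<alpha> :: "nat \<Rightarrow> real"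
    and M :: "'a measure" and w :: "nat \<Rightarrow> real \<Rightarrow> 'a \<Rightarrow> real"
  assumes "prob_space M"
    and "L > 0"
    and "\<forall>k\<ge>1. \<alpha> k > 0"
    and "\<exists>K. \<forall>k\<ge>1. \<alpha> k \<le> K"
    and "\<forall>k\<ge>1. std_bm M (w k)"
    and "prob_space.indep_vars M (\<lambda>_. Pi\<^sub>M UNIV (\<lambda>_. borel)) (\<lambda>k \<omega> t. w k t \<omega>) {1..}"
  shows "\<exists>C. \<forall>N t. 0 \<le> t \<and> t \<le> 1 \<longrightarrow>
           (\<integral>\<^sup>+\<omega>. ennreal ((SUP x\<in>{0..L}. \<bar>deriv (\<lambda>y. stoch_conv L \<nu> bc \<alpha> w N t y \<omega>) x\<bar>) ^ 4) \<partial>M)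
             \<le> ennreal (C * t powr (1/8))"
proof -
  obtain K where "\<forall>k\<ge>1. \<bar>\<alpha> k\<bar> \<le> K" using assms(3,4) by fastforce
  then show ?thesis
    using nn_integral_sup_deriv_stoch_conv_le[OF assms(1,2,5,6)] by blast
qed

end
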